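(* Let $D'$ be a Falk subcomplex of type $s_3$ in the Artin complex $D(B_3)$. Then the orthoscheme metric on $D'$ is $\mathrm{CAT}(0)$.
   Context: $A(B_3)=\langle s_1,s_2,s_3 \mid s_1s_2s_1=s_2s_1s_2,\ s_1s_3=s_3s_1,\ s_2s_3s_2s_3=s_3s_2s_3s_2\rangle$ and $W(B_3)$ is its quotient by $s_i^2=1$. For $i=1,2,3$, $\hat s_i$ denotes the standard parabolic subgroup generated by the other two generators (in $A(B_3)$ or $W(B_3)$). The Artin complex $D(B_3)$ (resp. Coxeter complex $C(B_3)$) has vertices the cosets $g\hat s_i$ in $A(B_3)$ (resp. $W(B_3)$), of type $\hat s_i$, and a set of vertices spans a simplex iff the cosets have nonempty common intersection; $C(B_3)$ is a triangulation of the 2-sphere on which $W(B_3)$ acts by reflections. Let $\rho:D(B_3)\to C(B_3)$ be the simplicial map induced by the quotient $A(B_3)\to W(B_3)$. A Falk subcomplex of type $s_3$: take a reflection $r\in W(B_3)$ conjugate to $s_3$, let $H$ be the subcomplex of $C(B_3)$ fixed pointwise by $r$, choose one of the two components of $C(B_3)\setminus H$, let $U$ be the largest closed subcomplex of $C(B_3)$ contained in that component, and take a lift of $U$ along $\rho$ (a subcomplex of $D(B_3)$ mapped isomorphically onto $U$ by $\rho$). The orthoscheme metric on $D'$ is the piecewise Euclidean length metric in which each 2-simplex is a Euclidean isosceles right triangle with the right angle at its vertex of type $\hat s_2$ (angles $\pi/4$ at the vertices of types $\hat s_1$ and $\hat s_3$). *)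

theory Defs
  imports "HOL-Analysis.Analysis"
begin

datatype gen = S1 | S2 | S3

text \<open>A letter is a generator together with an exponent sign (True = +1, False = -1).\<close>
type_synonym word = "(gen \<times> bool) list"

definition winv :: "word \<Rightarrow> word" where
  "winv w = rev (map (\<lambda>(i,b). (i, \<not> b)) w)"

definition artin_rels :: "(word \<times> word) set" where
  "artin_rels =
     {([(S1,True),(S2,True),(S1,True)], [(S2,True),(S1,True),(S2,True)]),
      ([(S1,True),(S3,True)], [(S3,True),(S1,True)]),
      ([(S2,True),(S3,True),(S2,True),(S3,True)], [(S3,True),(S2,True),(S3,True),(S2,True)])}"

text \<open>Word equivalence: equality in A(B_3) if \<open>cox = False\<close>, equality in W(B_3) (extra
  relations s_i^2 = 1) if \<open>cox = True\<close>.\<close>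
inductive geq :: "bool \<Rightarrow> word \<Rightarrow> word \<Rightarrow> bool" for cox where
  geq_refl: "geq cox w w"
| geq_sym: "geq cox u w \<Longrightarrow> geq cox w u"
| geq_trans: "geq cox u v \<Longrightarrow> geq cox v w \<Longrightarrow> geq cox u w"
| geq_free: "geq cox (u @ [(i,b),(i,\<not> b)] @ v) (u @ v)"
| geq_rel: "(l, r) \<in> artin_rels \<Longrightarrow> geq cox (u @ l @ v) (u @ r @ v)"
| geq_sq: "cox \<Longrightarrow> geq cox (u @ [(i,True),(i,True)] @ v) (u @ v)"

text \<open>Words representing elements of the standard parabolic subgroup \<open>\<hat>s_i\<close>
  (generated by the generators other than s_i).\<close>
definition parab :: "gen \<Rightarrow> word set" where
  "parab i = {w. \<forall>(j,b)\<in>set w. j \<noteq> i}"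

definition coset :: "bool \<Rightarrow> word \<Rightarrow> gen \<Rightarrow> word set" where
  "coset cox g i = {w. \<exists>u\<in>parab i. geq cox w (g @ u)}"

text \<open>A vertex is a pair (type, coset). A simplicial complex is a set of simplices
  (finite nonempty vertex sets).\<close>
type_synonym vertex = "gen \<times> word set"

definition verts :: "bool \<Rightarrow> vertex set" where
  "verts cox = {(i, coset cox g i) | g i. True}"

definition cplx :: "bool \<Rightarrow> vertex set set" where
  "cplx cox = {\<sigma>. \<sigma> \<noteq> {} \<and> finite \<sigma> \<and> \<sigma> \<subseteq> verts cox \<and> \<Inter> (snd ` \<sigma>) \<noteq> {}}"

abbreviation DB3 :: "vertex set set" where "DB3 \<equiv> cplx False"
abbreviation CB3 :: "vertex set set" where "CB3 \<equiv> cplx True"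

text \<open>The simplicial map rho : D(B_3) \<rightarrow> C(B_3) induced by A(B_3) \<rightarrow> W(B_3):
  g \<hat>s_i \<mapsto> (image of g) \<hat>s_i.\<close>
definition rho :: "vertex \<Rightarrow> vertex" where
  "rho v = (fst v, {w. \<exists>a\<in>snd v. geq True w a})"

definition wact :: "word \<Rightarrow> vertex \<Rightarrow> vertex" where
  "wact r v = (fst v, {w. \<exists>a\<in>snd v. geq True w (r @ a)})"

definition is_reflection_conj_s3 :: "word \<Rightarrow> bool" where
  "is_reflection_conj_s3 r \<longleftrightarrow> (\<exists>g. geq True r (g @ [(S3,True)] @ winv g))"

definition fixcplx :: "word \<Rightarrow> vertex set set" where
  "fixcplx r = {\<sigma>\<in>CB3. \<forall>v\<in>\<sigma>. wact r v = v}"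

definition csimp :: "'v set \<Rightarrow> ('v \<Rightarrow> real) set" where
  "csimp \<sigma> = {p. (\<forall>v. v \<notin> \<sigma> \<longrightarrow> p v = 0) \<and> (\<forall>v\<in>\<sigma>. 0 \<le> p v) \<and> sum p \<sigma> = 1}"

definition realize :: "'v set set \<Rightarrow> ('v \<Rightarrow> real) set" where
  "realize K = (\<Union>\<sigma>\<in>K. csimp \<sigma>)"

definition subcomplex :: "'v set set \<Rightarrow> 'v set set \<Rightarrow> bool" where
  "subcomplex L K \<longleftrightarrow> L \<subseteq> K \<and> (\<forall>\<sigma>\<in>L. \<forall>\<tau>. \<tau> \<noteq> {} \<and> \<tau> \<subseteq> \<sigma> \<longrightarrow> \<tau> \<in> L)"

definition is_lift :: "vertex set set \<Rightarrow> vertex set set \<Rightarrow> bool" where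
  "is_lift D' U \<longleftrightarrow> subcomplex D' DB3 \<and> inj_on rho (\<Union>D') \<and> (\<lambda>\<sigma>. rho ` \<sigma>) ` D' = U"

text \<open>Falk subcomplex of type s_3.  The realization of C(B_3) carries the (product =
  Euclidean, since C(B_3) is finite) topology of functions vertex \<Rightarrow> real.\<close>
definition falk_s3 :: "vertex set set \<Rightarrow> bool" where
  "falk_s3 D' \<longleftrightarrow> (\<exists>r x U. is_reflection_conj_s3 r \<and>
      x \<in> realize CB3 - realize (fixcplx r) \<and>
      U = {\<sigma>\<in>CB3. csimp \<sigma> \<subseteq> connected_component_set (realize CB3 - realize (fixcplx r)) x} \<and>
      is_lift D' U)"

text \<open>Each closed simplex is mapped affinely (via vertex types) into the Euclidean plane
  (= complex plane): type \<hat>s_2 \<mapsto> 0, \<hat>s_1 \<mapsto> 1, \<hat>s_3 \<mapsto> i; on a 2-simplex this is an isometry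
  onto an isosceles right triangle with right angle at the \<hat>s_2 vertex.\<close>
fun corner :: "gen \<Rightarrow> complex" where
  "corner S1 = 1" | "corner S2 = 0" | "corner S3 = \<i>"

definition opos :: "(vertex \<Rightarrow> real) \<Rightarrow> complex" where
  "opos p = (\<Sum>v\<in>{v. p v \<noteq> 0}. complex_of_real (p v) * corner (fst v))"

text \<open>Piecewise Euclidean length (intrinsic) metric: infimum of lengths of strings of points
  whose consecutive members lie in a common closed simplex.\<close>
definition string_ok :: "vertex set set \<Rightarrow> (vertex \<Rightarrow> real) list \<Rightarrow> bool" where
  "string_ok K xs \<longleftrightarrow> xs \<noteq> [] \<and>
     (\<forall>(a,b)\<in>set (zip xs (tl xs)). \<exists>\<sigma>\<in>K. a \<in> csimp \<sigma> \<and> b \<in> csimp \<sigma>)"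

definition string_len :: "(vertex \<Rightarrow> real) list \<Rightarrow> real" where
  "string_len xs = sum_list (map (\<lambda>(a,b). cmod (opos a - opos b)) (zip xs (tl xs)))"

definition orth_dist :: "vertex set set \<Rightarrow> (vertex \<Rightarrow> real) \<Rightarrow> (vertex \<Rightarrow> real) \<Rightarrow> real" where
  "orth_dist K x y = Inf {string_len xs | xs. string_ok K xs \<and> hd xs = x \<and> last xs = y}"

definition metric_on :: "'a set \<Rightarrow> ('a \<Rightarrow> 'a \<Rightarrow> real) \<Rightarrow> bool" where
  "metric_on X d \<longleftrightarrow> (\<forall>x\<in>X. \<forall>y\<in>X. 0 \<le> d x y \<and> (d x y = 0 \<longleftrightarrow> x = y) \<and> d x y = d y x) \<and>
     (\<forall>x\<in>X. \<forall>y\<in>X. \<forall>z\<in>X. d x z \<le> d x y + d y z)"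

definition geodesic_path :: "'a set \<Rightarrow> ('a \<Rightarrow> 'a \<Rightarrow> real) \<Rightarrow> (real \<Rightarrow> 'a) \<Rightarrow> 'a \<Rightarrow> 'a \<Rightarrow> bool" where
  "geodesic_path X d \<gamma> a b \<longleftrightarrow> \<gamma> 0 = a \<and> \<gamma> (d a b) = b \<and>
     (\<forall>s\<in>{0..d a b}. \<gamma> s \<in> X) \<and>
     (\<forall>s\<in>{0..d a b}. \<forall>t\<in>{0..d a b}. d (\<gamma> s) (\<gamma> t) = \<bar>s - t\<bar>)"

definition cmp_pt :: "complex \<Rightarrow> complex \<Rightarrow> real \<Rightarrow> real \<Rightarrow> complex" where
  "cmp_pt A B L s = A + complex_of_real (s / L) * (B - A)"

definition CAT0 :: "'a set \<Rightarrow> ('a \<Rightarrow> 'a \<Rightarrow> real) \<Rightarrow> bool" where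
  "CAT0 X d \<longleftrightarrow> metric_on X d \<and>
    (\<forall>a\<in>X. \<forall>b\<in>X. \<exists>\<gamma>. geodesic_path X d \<gamma> a b) \<and>
    (\<forall>p\<in>X. \<forall>q\<in>X. \<forall>r\<in>X. \<forall>\<gamma>1 \<gamma>2 \<gamma>3 P Q R.
       geodesic_path X d \<gamma>1 p q \<and> geodesic_path X d \<gamma>2 q r \<and> geodesic_path X d \<gamma>3 r p \<and>
       cmod (P - Q) = d p q \<and> cmod (Q - R) = d q r \<and> cmod (R - P) = d r p \<longrightarrow>
       (\<forall>(\<gamma>, A, B, L) \<in> {(\<gamma>1, P, Q, d p q), (\<gamma>2, Q, R, d q r), (\<gamma>3, R, P, d r p)}.
        \<forall>(\<gamma>', A', B', L') \<in> {(\<gamma>1, P, Q, d p q), (\<gamma>2, Q, R, d q r), (\<gamma>3, R, P, d r p)}.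
        \<forall>s\<in>{0..L}. \<forall>t\<in>{0..L'}.
          d (\<gamma> s) (\<gamma>' t) \<le> cmod (cmp_pt A B L s - cmp_pt A' B' L' t)))"

end

theory Submission
  imports Defs
begin

(* The Weyl group W(B_3) acts faithfully on Z^3 by signed permutations, and the stabilisers of
   (1,0,0), (1,1,0), (1,1,1) are the parabolic subgroups of types \<hat>s_1, \<hat>s_2, \<hat>s_3. Hence
   C(B_3) is the barycentric subdivision of the boundary of the cube [-1,1]^3, with vertices the
   face centres, edge midpoints and corners. A reflection conjugate to s_3 negates one coordinate
   x_j, so the components of the complement of its wall are the open hemispheres x_j > 0 and
   x_j < 0, and the largest subcomplex U inside either of them is a face x_j = e of the cube, cut
   into eight triangles. Forgetting x_j identifies the lift D' of U with the square [-1,1]^2 so that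
   every triangle becomes an isosceles right triangle with its right angle at the edge midpoint,
   which is of type \<hat>s_2. The orthoscheme metric on D' is therefore the Euclidean metric of a
   convex planar set, which is CAT(0). *)


section \<open>The signed permutation action\<close>

type_synonym point = "int \<times> int \<times> int"

fun gen_act :: "gen \<Rightarrow> point \<Rightarrow> point" where
  "gen_act S1 (a, b, c) = (b, a, c)"
| "gen_act S2 (a, b, c) = (a, c, b)"
| "gen_act S3 (a, b, c) = (a, b, - c)"

primrec word_act :: "word \<Rightarrow> point \<Rightarrow> point" where
  "word_act [] x = x"
| "word_act (l # w) x = gen_act (fst l) (word_act w x)"

lemma word_act_append [simp]: "word_act (u @ v) x = word_act u (word_act v x)"
  by (induct u) auto

lemma gen_act_gen_act [simp]: "gen_act s (gen_act s x) = x"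
  by (cases s; cases x) auto

lemma winv_Cons: "winv (l # g) = winv g @ [(fst l, \<not> snd l)]"
  by (cases l) (simp add: winv_def)

lemma word_act_winv [simp]:
  "word_act (winv g) (word_act g x) = x" "word_act g (word_act (winv g) x) = x"
  by (induct g arbitrary: x) (auto simp: winv_def winv_Cons)

lemma geq_word_act_eq: "geq cox u w \<Longrightarrow> word_act u = word_act w"
proof (induct rule: geq.induct)
  case (geq_rel l r u v)
  then have "word_act l = word_act r"
    by (auto simp: artin_rels_def fun_eq_iff)
  then show ?case
    by (intro ext) simp
qed (auto simp: fun_eq_iff)

lemma geq_append_cong: "geq cox u w \<Longrightarrow> geq cox (x @ u @ y) (x @ w @ y)"
proof (induct rule: geq.induct)
  case (geq_refl w)
  show ?case by (rule geq_refl)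
next
  case (geq_sym u w)
  from geq_sym(2) show ?case by (rule geq.geq_sym)
next
  case (geq_trans u v w)
  then show ?case by (metis geq.geq_trans)
next
  case (geq_free u i b v)
  show ?case
    using geq.geq_free[of cox "x @ u" i b "v @ y"] by simp
next
  case (geq_rel l r u v)
  show ?case
    using geq.geq_rel[OF geq_rel, where u = "x @ u" and v = "v @ y"] by simp
next
  case (geq_sq u i v)
  show ?case
    using geq.geq_sq[OF geq_sq, where u = "x @ u" and i = i and v = "v @ y"] by simp
qed

declare geq.geq_trans [trans]

abbreviation positive_word :: "gen list \<Rightarrow> word" where
  "positive_word ss \<equiv> map (\<lambda>s. (s, True)) ss"

lemma geq_letter_positive: "geq True (u @ [(s, b)] @ v) (u @ [(s, True)] @ v)"
proof (cases b)
  case False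
  have "geq True (u @ [(s, False)] @ v) ((u @ [(s, False)]) @ [(s, True), (s, True)] @ v)"
    using geq_sq[of True "u @ [(s, False)]" s v] by (simp add: geq.geq_sym)
  moreover have "geq True (u @ [(s, False), (s, True)] @ ([(s, True)] @ v)) (u @ [(s, True)] @ v)"
    using geq_free[of True u s False "[(s, True)] @ v"] by simp
  ultimately show ?thesis
    using False by (auto intro: geq_trans)
qed (simp add: geq_refl)

section \<open>Deciding equality in W(B_3) by certificates\<close>

definition coxeter_moves :: "(gen list \<times> gen list) list" where
  "coxeter_moves =
     [([S1, S2, S1], [S2, S1, S2]), ([S2, S1, S2], [S1, S2, S1]),
      ([S1, S3], [S3, S1]), ([S3, S1], [S1, S3]),
      ([S2, S3, S2, S3], [S3, S2, S3, S2]), ([S3, S2, S3, S2], [S2, S3, S2, S3]),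
      ([S1, S1], []), ([S2, S2], []), ([S3, S3], []),
      ([], [S1, S1]), ([], [S2, S2]), ([], [S3, S3])]"

lemma coxeter_moves_cases:
  assumes "(l, r) \<in> set coxeter_moves"
  obtains "(positive_word l, positive_word r) \<in> artin_rels"
    | "(positive_word r, positive_word l) \<in> artin_rels"
    | s where "l = [s, s]" "r = []"
    | s where "l = []" "r = [s, s]"
  using assms unfolding coxeter_moves_def artin_rels_def by auto

lemma coxeter_move_geq:
  assumes "(l, r) \<in> set coxeter_moves"
  shows "geq True (positive_word (u @ l @ v)) (positive_word (u @ r @ v))"
  using assms
proof (cases rule: coxeter_moves_cases)
  case 1
  then show ?thesis
    by (simp add: geq_rel)
next
  case 2
  then show ?thesis
    by (simp add: geq_rel geq_sym)
next
  case (3 s)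
  then show ?thesis
    using geq_sq[of True "positive_word u" s "positive_word v"] by simp
next
  case (4 s)
  then show ?thesis
    using geq_sq[of True "positive_word u" s "positive_word v"] by (simp add: geq_sym)
qed

text \<open>A certificate step \<open>(k, m)\<close> rewrites, at position \<open>k\<close>, the left side of the \<open>m\<close>-th entry of
  \<open>coxeter_moves\<close> into its right side.\<close>

fun apply_move :: "nat \<times> nat \<Rightarrow> gen list \<Rightarrow> gen list option" where
  "apply_move (k, m) w =
     (if m < length coxeter_moves \<and> k \<le> length w
         \<and> take (length (fst (coxeter_moves ! m))) (drop k w) = fst (coxeter_moves ! m)
      then Some (take k w @ snd (coxeter_moves ! m) @ drop (k + length (fst (coxeter_moves ! m))) w)
      else None)"

fun run_moves :: "gen list \<Rightarrow> (nat \<times> nat) list \<Rightarrow> gen list option" where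
  "run_moves w [] = Some w"
| "run_moves w (c # cs) = (case apply_move c w of None \<Rightarrow> None | Some w' \<Rightarrow> run_moves w' cs)"

lemma apply_move_geq:
  assumes "apply_move c w = Some w'"
  shows "geq True (positive_word w) (positive_word w')"
proof -
  obtain k m where c: "c = (k, m)" by force
  obtain l r where lr: "coxeter_moves ! m = (l, r)" by force
  from assms c lr have m: "m < length coxeter_moves" and l: "take (length l) (drop k w) = l"
    and w': "w' = take k w @ r @ drop (k + length l) w"
    by (auto split: if_splits)
  have "w = take k w @ take (length l) (drop k w) @ drop (length l) (drop k w)"
    by (metis append_take_drop_id)
  then have w: "w = take k w @ l @ drop (k + length l) w"
    using l by (simp add: add.commute del: append_take_drop_id)
  have "(l, r) \<in> set coxeter_moves"
    using m lr by (metis nth_mem)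
  from coxeter_move_geq[OF this] show ?thesis
    using w w' by metis
qed

lemma run_moves_geq: "run_moves w cs = Some w' \<Longrightarrow> geq True (positive_word w) (positive_word w')"
proof (induct cs arbitrary: w)
  case Nil
  then show ?case by (auto intro: geq_refl)
next
  case (Cons c cs)
  then obtain w1 where "apply_move c w = Some w1" "run_moves w1 cs = Some w'"
    by (auto split: option.splits)
  then show ?case
    using Cons(1) apply_move_geq geq_trans by blast
qed

text \<open>The image of \<open>(1, 2, 3)\<close> determines the signed permutation by which a word acts.\<close>

definition perm_code :: "word \<Rightarrow> point" where
  "perm_code w = word_act w (1, 2, 3)"

definition normal_form_table :: "(point \<times> gen list) list" where
  "normal_form_table =
    [((1, 2, 3), []), ((2, 1, 3), [S1]), ((1, 3, 2), [S2]), ((1, 2, -3), [S3]),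
     ((2, 3, 1), [S2, S1]), ((2, 1, -3), [S3, S1]), ((3, 1, 2), [S1, S2]), ((1, 3, -2), [S3, S2]),
     ((1, -3, 2), [S2, S3]), ((3, 2, 1), [S1, S2, S1]), ((2, 3, -1), [S3, S2, S1]),
     ((2, -3, 1), [S2, S3, S1]), ((3, 1, -2), [S3, S1, S2]), ((1, -2, 3), [S2, S3, S2]),
     ((-3, 1, 2), [S1, S2, S3]), ((1, -3, -2), [S3, S2, S3]), ((3, 2, -1), [S3, S1, S2, S1]),
     ((2, -1, 3), [S2, S3, S2, S1]), ((-3, 2, 1), [S1, S2, S3, S1]),
     ((2, -3, -1), [S3, S2, S3, S1]), ((3, -2, 1), [S2, S3, S1, S2]),
     ((-2, 1, 3), [S1, S2, S3, S2]), ((1, -2, -3), [S3, S2, S3, S2]),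
     ((-3, 1, -2), [S3, S1, S2, S3]), ((3, -1, 2), [S2, S3, S1, S2, S1]),
     ((-1, 2, 3), [S1, S2, S3, S2, S1]), ((2, -1, -3), [S3, S2, S3, S2, S1]),
     ((-3, 2, -1), [S3, S1, S2, S3, S1]), ((-2, 3, 1), [S1, S2, S3, S1, S2]),
     ((3, -2, -1), [S3, S2, S3, S1, S2]), ((-2, 1, -3), [S3, S1, S2, S3, S2]),
     ((-3, -2, 1), [S2, S3, S1, S2, S3]), ((-1, 3, 2), [S1, S2, S3, S1, S2, S1]),
     ((3, -1, -2), [S3, S2, S3, S1, S2, S1]), ((-1, 2, -3), [S3, S1, S2, S3, S2, S1]),
     ((-3, -1, 2), [S2, S3, S1, S2, S3, S1]), ((-2, 3, -1), [S3, S1, S2, S3, S1, S2]),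
     ((-2, -3, 1), [S2, S3, S1, S2, S3, S2]), ((-3, -2, -1), [S3, S2, S3, S1, S2, S3]),
     ((-1, 3, -2), [S3, S1, S2, S3, S1, S2, S1]), ((-1, -3, 2), [S2, S3, S1, S2, S3, S2, S1]),
     ((-3, -1, -2), [S3, S2, S3, S1, S2, S3, S1]), ((-2, -1, 3), [S2, S3, S1, S2, S3, S1, S2]),
     ((-2, -3, -1), [S3, S2, S3, S1, S2, S3, S2]), ((-1, -2, 3), [S2, S3, S1, S2, S3, S1, S2, S1]),
     ((-1, -3, -2), [S3, S2, S3, S1, S2, S3, S2, S1]),
     ((-2, -1, -3), [S3, S2, S3, S1, S2, S3, S1, S2]),
     ((-1, -2, -3), [S3, S2, S3, S1, S2, S3, S1, S2, S1])]"

definition rewrite_table :: "((gen \<times> point) \<times> (nat \<times> nat) list) list" where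
  "rewrite_table =
    [((S1, (2, 1, 3)), [(0,6)]), ((S2, (1, 3, 2)), [(0,7)]), ((S1, (1, 2, -3)), [(0,2)]),
     ((S3, (1, 2, -3)), [(0,8)]), ((S2, (2, 3, 1)), [(0,7)]), ((S1, (2, 1, -3)), [(0,2), (1,6)]),
     ((S3, (2, 1, -3)), [(0,8)]), ((S1, (3, 1, 2)), [(0,6)]), ((S2, (3, 1, 2)), [(0,1)]),
     ((S1, (1, 3, -2)), [(0,2)]), ((S3, (1, 3, -2)), [(0,8)]), ((S2, (1, -3, 2)), [(0,7)]),
     ((S1, (3, 2, 1)), [(0,6)]), ((S2, (3, 2, 1)), [(1,0), (0,7)]), ((S1, (2, 3, -1)), [(0,2)]),
     ((S3, (2, 3, -1)), [(0,8)]), ((S2, (2, -3, 1)), [(0,7)]), ((S1, (3, 1, -2)), [(0,2), (1,6)]),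
     ((S3, (3, 1, -2)), [(0,8)]), ((S2, (1, -2, 3)), [(0,7)]), ((S1, (-3, 1, 2)), [(0,6)]),
     ((S2, (-3, 1, 2)), [(0,1), (2,2)]), ((S1, (1, -3, -2)), [(0,2)]), ((S2, (1, -3, -2)), [(0,4)]),
     ((S3, (1, -3, -2)), [(0,8)]), ((S1, (3, 2, -1)), [(0,2), (1,6)]), ((S3, (3, 2, -1)), [(0,8)]),
     ((S2, (2, -1, 3)), [(0,7)]), ((S1, (-3, 2, 1)), [(0,6)]),
     ((S2, (-3, 2, 1)), [(0,1), (2,2), (3,6)]), ((S1, (2, -3, -1)), [(0,2)]),
     ((S2, (2, -3, -1)), [(0,4)]), ((S3, (2, -3, -1)), [(0,8)]), ((S2, (3, -2, 1)), [(0,7)]),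
     ((S1, (-2, 1, 3)), [(0,6)]), ((S2, (-2, 1, 3)), [(0,1), (2,2)]), ((S1, (1, -2, -3)), [(0,2)]),
     ((S2, (1, -2, -3)), [(0,4), (3,7)]), ((S3, (1, -2, -3)), [(0,8)]),
     ((S1, (-3, 1, -2)), [(0,2), (1,6)]), ((S3, (-3, 1, -2)), [(0,8)]), ((S2, (3, -1, 2)), [(0,7)]),
     ((S1, (-1, 2, 3)), [(0,6)]), ((S2, (-1, 2, 3)), [(0,1), (2,2)]), ((S1, (2, -1, -3)), [(0,2)]),
     ((S2, (2, -1, -3)), [(0,4), (3,7)]), ((S3, (2, -1, -3)), [(0,8)]),
     ((S1, (-3, 2, -1)), [(0,2), (1,6)]), ((S3, (-3, 2, -1)), [(0,8)]), ((S1, (-2, 3, 1)), [(0,6)]),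
     ((S2, (-2, 3, 1)), [(0,1), (2,2), (3,6)]), ((S1, (3, -2, -1)), [(0,2)]),
     ((S2, (3, -2, -1)), [(0,4), (3,1)]), ((S3, (3, -2, -1)), [(0,8)]),
     ((S1, (-2, 1, -3)), [(0,2), (1,6)]), ((S3, (-2, 1, -3)), [(0,8)]),
     ((S1, (-3, -2, 1)), [(2,3), (0,0), (2,4), (1,2)]), ((S2, (-3, -2, 1)), [(0,7)]),
     ((S1, (-1, 3, 2)), [(0,6)]), ((S2, (-1, 3, 2)), [(0,1), (2,2), (3,6)]),
     ((S1, (3, -1, -2)), [(0,2)]), ((S2, (3, -1, -2)), [(4,0), (0,4), (3,7)]),
     ((S3, (3, -1, -2)), [(0,8)]), ((S1, (-1, 2, -3)), [(0,2), (1,6)]),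
     ((S3, (-1, 2, -3)), [(0,8)]), ((S1, (-3, -1, 2)), [(2,3), (0,0), (2,4), (1,2)]),
     ((S2, (-3, -1, 2)), [(0,7)]), ((S1, (-2, 3, -1)), [(0,2), (1,6)]),
     ((S3, (-2, 3, -1)), [(0,8)]), ((S1, (-2, -3, 1)), [(2,3), (0,0), (2,4), (1,2), (5,7)]),
     ((S2, (-2, -3, 1)), [(0,7)]), ((S1, (-3, -2, -1)), [(0,2), (3,3), (1,0), (3,4), (2,2)]),
     ((S2, (-3, -2, -1)), [(0,4), (3,1), (5,2)]), ((S3, (-3, -2, -1)), [(0,8)]),
     ((S1, (-1, 3, -2)), [(0,2), (1,6)]), ((S3, (-1, 3, -2)), [(0,8)]),
     ((S1, (-1, -3, 2)), [(2,3), (0,0), (2,4), (1,2), (5,7)]), ((S2, (-1, -3, 2)), [(0,7)]),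
     ((S1, (-3, -1, -2)), [(0,2), (3,3), (1,0), (3,4), (2,2)]),
     ((S2, (-3, -1, -2)), [(6,3), (4,0), (0,4), (3,7)]), ((S3, (-3, -1, -2)), [(0,8)]),
     ((S1, (-2, -1, 3)), [(2,3), (0,0), (2,4), (5,1), (1,2)]), ((S2, (-2, -1, 3)), [(0,7)]),
     ((S1, (-2, -3, -1)), [(0,2), (3,3), (1,0), (3,4), (2,2), (6,7)]),
     ((S2, (-2, -3, -1)), [(0,4), (3,1), (5,2)]), ((S3, (-2, -3, -1)), [(0,8)]),
     ((S1, (-1, -2, 3)), [(6,0), (2,3), (0,0), (2,4), (1,2), (5,7)]), ((S2, (-1, -2, 3)), [(0,7)]),
     ((S1, (-1, -3, -2)), [(0,2), (3,3), (1,0), (3,4), (2,2), (6,7)]),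
     ((S2, (-1, -3, -2)), [(0,4), (3,1), (5,2)]), ((S3, (-1, -3, -2)), [(0,8)]),
     ((S1, (-2, -1, -3)), [(0,2), (3,3), (1,0), (3,4), (6,1), (2,2)]),
     ((S2, (-2, -1, -3)), [(6,3), (4,0), (0,4), (3,7)]), ((S3, (-2, -1, -3)), [(0,8)]),
     ((S1, (-1, -2, -3)), [(7,0), (0,2), (3,3), (1,0), (3,4), (2,2), (6,7)]),
     ((S2, (-1, -2, -3)), [(6,3), (4,0), (0,4), (3,7)]), ((S3, (-1, -2, -3)), [(0,8)])]"

text \<open>\<open>rewrite_moves s t\<close> turns \<open>s\<close> followed by the normal form of \<open>t\<close> into the normal form of
  \<open>gen_act s t\<close>; pairs without an entry need no rewriting.\<close>

definition rewrite_moves :: "gen \<Rightarrow> point \<Rightarrow> (nat \<times> nat) list" where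
  "rewrite_moves s t = (case map_of rewrite_table (s, t) of None \<Rightarrow> [] | Some cs \<Rightarrow> cs)"

lemma normal_form_table_closed:
  "\<forall>(t, n) \<in> set normal_form_table. perm_code (positive_word n) = t \<and>
     (\<forall>s \<in> set [S1, S2, S3]. run_moves (s # n) (rewrite_moves s t) \<noteq> None
        \<and> map_of normal_form_table (gen_act s t) = run_moves (s # n) (rewrite_moves s t))"
  by code_simp

lemma gen_in_set: "i \<in> set [S1, S2, S3]"
  by (cases i) auto

lemma normal_form_exists:
  "\<exists>n. map_of normal_form_table (perm_code w) = Some n \<and> geq True w (positive_word n)"
proof (induct w)
  case Nil
  have "map_of normal_form_table (1, 2, 3) = Some []"
    by code_simp
  then show ?case
    by (auto simp: perm_code_def intro: geq_refl)
next
  case (Cons l w)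
  obtain s b where l: "l = (s, b)" by force
  from Cons obtain n where n: "map_of normal_form_table (perm_code w) = Some n"
    and w: "geq True w (positive_word n)" by blast
  let ?cs = "rewrite_moves s (perm_code w)"
  have "run_moves (s # n) ?cs \<noteq> None \<and> map_of normal_form_table (gen_act s (perm_code w)) = run_moves (s # n) ?cs"
    using bspec[OF normal_form_table_closed map_of_SomeD[OF n]] gen_in_set[of s] unfolding prod.case by blast
  then obtain n' where cs: "run_moves (s # n) ?cs = Some n'"
    and n': "map_of normal_form_table (gen_act s (perm_code w)) = Some n'"
    by auto
  have "geq True (l # w) (l # positive_word n)"
    using geq_append_cong[OF w, of "[l]" "[]"] by simp
  also have "geq True \<dots> (positive_word (s # n))"
    using geq_letter_positive[of "[]" s b] l by simp
  also have "geq True \<dots> (positive_word n')"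
    using run_moves_geq[OF cs] .
  finally show ?case
    using n' l by (auto simp: perm_code_def)
qed

definition signed_coord :: "int \<Rightarrow> point \<Rightarrow> int" where
  "signed_coord k x = sgn k * (if \<bar>k\<bar> = 1 then fst x else if \<bar>k\<bar> = 2 then fst (snd x) else snd (snd x))"

definition perm_apply :: "point \<Rightarrow> point \<Rightarrow> point" where
  "perm_apply t x = (signed_coord (fst t) x, signed_coord (fst (snd t)) x, signed_coord (snd (snd t)) x)"

lemma perm_apply_gen_act: "perm_apply (gen_act s t) x = gen_act s (perm_apply t x)"
  by (cases s; cases t) (simp_all add: perm_apply_def signed_coord_def sgn_minus)

lemma word_act_eq_perm_apply: "word_act w x = perm_apply (perm_code w) x"
proof (induct w)
  case Nil
  then show ?case
    by (cases x) (simp add: perm_code_def perm_apply_def signed_coord_def)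
next
  case (Cons l w)
  have "perm_code (l # w) = gen_act (fst l) (perm_code w)"
    by (simp add: perm_code_def)
  then show ?case
    by (simp only: perm_apply_gen_act word_act.simps Cons)
qed

lemma word_act_eq_iff_perm_code: "word_act u = word_act w \<longleftrightarrow> perm_code u = perm_code w"
proof
  assume "perm_code u = perm_code w"
  then show "word_act u = word_act w"
    by (simp add: fun_eq_iff word_act_eq_perm_apply)
qed (simp add: perm_code_def)

theorem coxeter_eq_iff_word_act_eq: "geq True u w \<longleftrightarrow> word_act u = word_act w"
proof
  assume "word_act u = word_act w"
  then have "perm_code u = perm_code w"
    by (simp add: word_act_eq_iff_perm_code)
  moreover obtain n where "map_of normal_form_table (perm_code u) = Some n" "geq True u (positive_word n)"
    using normal_form_exists by blast
  moreover obtain n' where "map_of normal_form_table (perm_code w) = Some n'" "geq True w (positive_word n')"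
    using normal_form_exists by blast
  ultimately show "geq True u w"
    by (metis geq.geq_sym geq.geq_trans option.inject)
qed (rule geq_word_act_eq)

definition signed_perms :: "point list" where
  "signed_perms = map fst normal_form_table"

lemma set_signed_perms: "set signed_perms = range perm_code"
proof
  show "range perm_code \<subseteq> set signed_perms"
    using normal_form_exists by (force simp: signed_perms_def dest: map_of_SomeD)
  show "set signed_perms \<subseteq> range perm_code"
  proof
    fix t
    assume "t \<in> set signed_perms"
    then obtain n where "(t, n) \<in> set normal_form_table"
      by (auto simp: signed_perms_def)
    with normal_form_table_closed have "t = perm_code (positive_word n)"
      by fastforce
    then show "t \<in> range perm_code"
      by simp
  qed
qed

lemma perm_code_in_signed_perms: "perm_code w \<in> set signed_perms"
  by (simp add: set_signed_perms)

section \<open>Cosets of the parabolic subgroups as points of the cube\<close>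

text \<open>The base point of type \<open>i\<close> is fixed exactly by the parabolic subgroup \<open>\<hat>s_i\<close>, so the
  cosets of \<open>\<hat>s_1\<close>, \<open>\<hat>s_2\<close>, \<open>\<hat>s_3\<close> become the face centres, edge midpoints and corners of
  the cube \<open>[-1,1]^3\<close>.\<close>

fun base_point :: "gen \<Rightarrow> point" where
  "base_point S1 = (1, 0, 0)"
| "base_point S2 = (1, 1, 0)"
| "base_point S3 = (1, 1, 1)"

lemma parab_fixes_base_point: "u \<in> parab i \<Longrightarrow> word_act u (base_point i) = base_point i"
proof (induct u)
  case (Cons l u)
  then have "u \<in> parab i" "fst l \<noteq> i"
    by (auto simp: parab_def split: prod.splits)
  with Cons show ?case
    by (cases i; cases "fst l") auto
qed simp

fun stabiliser_words :: "gen \<Rightarrow> gen list list" where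
  "stabiliser_words S1 = [[], [S2], [S3], [S3, S2], [S2, S3], [S2, S3, S2], [S3, S2, S3], [S3, S2, S3, S2]]"
| "stabiliser_words S2 = [[], [S1], [S3], [S3, S1]]"
| "stabiliser_words S3 = [[], [S1], [S2], [S2, S1], [S1, S2], [S1, S2, S1]]"

lemma stabiliser_words_complete:
  "\<forall>t \<in> set signed_perms. \<forall>i \<in> set [S1, S2, S3]. perm_apply t (base_point i) = base_point i \<longrightarrow>
     (\<exists>n \<in> set (stabiliser_words i). i \<notin> set n \<and> perm_code (positive_word n) = t)"
  by code_simp

lemma stabiliser_in_parab:
  assumes "word_act w (base_point i) = base_point i"
  shows "\<exists>u \<in> parab i. word_act u = word_act w"
proof -
  obtain n where "i \<notin> set n" "perm_code (positive_word n) = perm_code w"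
    using stabiliser_words_complete perm_code_in_signed_perms[of w] gen_in_set[of i] assms
    by (fastforce simp: word_act_eq_perm_apply)
  then show ?thesis
    by (intro bexI[of _ "positive_word n"]) (auto simp: parab_def word_act_eq_iff_perm_code)
qed

definition point_coset :: "gen \<Rightarrow> point \<Rightarrow> word set" where
  "point_coset i q = {w. word_act w (base_point i) = q}"

lemma coset_True_eq: "coset True g i = point_coset i (word_act g (base_point i))"
proof (rule set_eqI, rule iffI)
  fix w
  assume "w \<in> coset True g i"
  then obtain u where "u \<in> parab i" "geq True w (g @ u)"
    by (auto simp: coset_def)
  then show "w \<in> point_coset i (word_act g (base_point i))"
    by (auto simp: point_coset_def coxeter_eq_iff_word_act_eq parab_fixes_base_point)
next
  fix w
  assume "w \<in> point_coset i (word_act g (base_point i))"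
  then have "word_act (winv g @ w) (base_point i) = base_point i"
    by (simp add: point_coset_def)
  then obtain u where u: "u \<in> parab i" "word_act u = word_act (winv g @ w)"
    using stabiliser_in_parab by blast
  then have "word_act w = word_act (g @ u)"
    by (auto simp: fun_eq_iff)
  then show "w \<in> coset True g i"
    using u(1) by (auto simp: coset_def coxeter_eq_iff_word_act_eq)
qed

definition vertex_point :: "vertex \<Rightarrow> point" where
  "vertex_point v = word_act (SOME w. w \<in> snd v) (base_point (fst v))"

lemma vertex_point_point_coset:
  "vertex_point (i, point_coset i (word_act g (base_point i))) = word_act g (base_point i)"
proof -
  have "(SOME w. w \<in> point_coset i (word_act g (base_point i))) \<in> point_coset i (word_act g (base_point i))"
    by (rule someI[of _ g]) (simp add: point_coset_def)
  then show ?thesis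
    by (simp add: vertex_point_def point_coset_def)
qed

lemma verts_True_iff: "v \<in> verts True \<longleftrightarrow> (\<exists>g. v = (fst v, point_coset (fst v) (word_act g (base_point (fst v)))))"
  unfolding verts_def by (force simp: coset_True_eq)

lemma vertex_eq_point_coset: "v \<in> verts True \<Longrightarrow> v = (fst v, point_coset (fst v) (vertex_point v))"
  using verts_True_iff vertex_point_point_coset by metis

lemma vertex_eqI:
  "v \<in> verts True \<Longrightarrow> v' \<in> verts True \<Longrightarrow> fst v = fst v' \<Longrightarrow> vertex_point v = vertex_point v' \<Longrightarrow> v = v'"
  by (metis vertex_eq_point_coset)

lemma vertex_point_signed_perm:
  "v \<in> verts True \<Longrightarrow> \<exists>t \<in> set signed_perms. vertex_point v = perm_apply t (base_point (fst v))"
  by (metis verts_True_iff vertex_point_point_coset word_act_eq_perm_apply perm_code_in_signed_perms)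

lemma signed_perm_vertex:
  assumes "t \<in> set signed_perms"
  shows "(i, point_coset i (perm_apply t (base_point i))) \<in> verts True"
    and "vertex_point (i, point_coset i (perm_apply t (base_point i))) = perm_apply t (base_point i)"
proof -
  obtain w where "perm_apply t (base_point i) = word_act w (base_point i)"
    using assms by (auto simp: set_signed_perms word_act_eq_perm_apply)
  then show "(i, point_coset i (perm_apply t (base_point i))) \<in> verts True"
    and "vertex_point (i, point_coset i (perm_apply t (base_point i))) = perm_apply t (base_point i)"
    by (auto simp: verts_True_iff vertex_point_point_coset)
qed

lemma mem_vertex_iff:
  "v \<in> verts True \<Longrightarrow> w \<in> snd v \<longleftrightarrow> perm_apply (perm_code w) (base_point (fst v)) = vertex_point v"
  by (subst vertex_eq_point_coset) (simp_all add: point_coset_def word_act_eq_perm_apply)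

lemma CB3_iff: "\<sigma> \<in> CB3 \<longleftrightarrow> \<sigma> \<noteq> {} \<and> finite \<sigma> \<and> \<sigma> \<subseteq> verts True \<and>
    (\<exists>t \<in> set signed_perms. \<forall>v \<in> \<sigma>. perm_apply t (base_point (fst v)) = vertex_point v)"
proof -
  have "\<Inter> (snd ` \<sigma>) \<noteq> {} \<longleftrightarrow> (\<exists>t \<in> set signed_perms. \<forall>v \<in> \<sigma>. perm_apply t (base_point (fst v)) = vertex_point v)"
    if "\<sigma> \<subseteq> verts True"
  proof
    assume "\<Inter> (snd ` \<sigma>) \<noteq> {}"
    then obtain w where "\<forall>v \<in> \<sigma>. w \<in> snd v"
      by auto
    then show "\<exists>t \<in> set signed_perms. \<forall>v \<in> \<sigma>. perm_apply t (base_point (fst v)) = vertex_point v"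
      using that mem_vertex_iff perm_code_in_signed_perms by blast
  next
    assume "\<exists>t \<in> set signed_perms. \<forall>v \<in> \<sigma>. perm_apply t (base_point (fst v)) = vertex_point v"
    then obtain w where "\<forall>v \<in> \<sigma>. perm_apply (perm_code w) (base_point (fst v)) = vertex_point v"
      by (auto simp: set_signed_perms)
    then have "\<forall>v \<in> \<sigma>. w \<in> snd v"
      using that mem_vertex_iff by blast
    then show "\<Inter> (snd ` \<sigma>) \<noteq> {}"
      by auto
  qed
  then show ?thesis
    unfolding cplx_def by blast
qed

lemma finite_verts: "finite (verts True)"
proof -
  have "verts True \<subseteq> (\<lambda>(i, t). (i, point_coset i (perm_apply t (base_point i)))) ` (set [S1, S2, S3] \<times> set signed_perms)"
    using vertex_eq_point_coset vertex_point_signed_perm gen_in_set by fastforce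
  then show ?thesis
    using finite_subset by blast
qed

section \<open>Reflections and coordinate planes\<close>

datatype axis = Axis1 | Axis2 | Axis3

lemma axis_in_set: "j \<in> set [Axis1, Axis2, Axis3]"
  by (cases j) auto

fun coord :: "axis \<Rightarrow> point \<Rightarrow> int" where
  "coord Axis1 (a, b, c) = a"
| "coord Axis2 (a, b, c) = b"
| "coord Axis3 (a, b, c) = c"

fun negate_coord :: "axis \<Rightarrow> point \<Rightarrow> point" where
  "negate_coord Axis1 (a, b, c) = (- a, b, c)"
| "negate_coord Axis2 (a, b, c) = (a, - b, c)"
| "negate_coord Axis3 (a, b, c) = (a, b, - c)"

lemma negate_coord_eq_self_iff: "negate_coord j q = q \<longleftrightarrow> coord j q = 0"
  by (cases j; cases q) auto

definition wall_axis :: "point \<Rightarrow> axis" where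
  "wall_axis t = (if \<bar>fst t\<bar> = 3 then Axis1 else if \<bar>fst (snd t)\<bar> = 3 then Axis2 else Axis3)"

lemma signed_perms_abs:
  "\<forall>t \<in> set signed_perms. (\<bar>fst t\<bar>, \<bar>fst (snd t)\<bar>, \<bar>snd (snd t)\<bar>)
     \<in> set [(1, 2, 3), (1, 3, 2), (2, 1, 3), (2, 3, 1), (3, 1, 2), (3, 2, 1)]"
  by code_simp

lemma perm_apply_gen_act_S3:
  assumes "t \<in> set signed_perms"
  shows "perm_apply t (gen_act S3 y) = negate_coord (wall_axis t) (perm_apply t y)"
proof -
  obtain a b c where t: "t = (a, b, c)" by (cases t)
  obtain x1 x2 x3 where y: "y = (x1, x2, x3)" by (cases y)
  have "(\<bar>a\<bar>, \<bar>b\<bar>, \<bar>c\<bar>) \<in> set [(1, 2, 3), (1, 3, 2), (2, 1, 3), (2, 3, 1), (3, 1, 2), (3, 2, 1)]"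
    using bspec[OF signed_perms_abs assms] by (simp only: t fst_conv snd_conv)
  then show ?thesis
    unfolding t y
    by (simp only: set_simps insert_iff empty_iff prod.inject)
      (elim disjE conjE; simp add: perm_apply_def signed_coord_def wall_axis_def)
qed

lemma reflection_conj_s3_negates_coord:
  assumes "is_reflection_conj_s3 r"
  shows "\<exists>j. word_act r = negate_coord j"
proof -
  obtain g where "geq True r (g @ [(S3, True)] @ winv g)"
    using assms by (auto simp: is_reflection_conj_s3_def)
  then have r: "word_act r = word_act (g @ [(S3, True)] @ winv g)"
    by (simp add: coxeter_eq_iff_word_act_eq)
  have "word_act r q = negate_coord (wall_axis (perm_code g)) q" for q
  proof -
    have "word_act r q = word_act g (gen_act S3 (word_act (winv g) q))"
      by (simp add: r)
    also have "\<dots> = perm_apply (perm_code g) (gen_act S3 (word_act (winv g) q))"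
      by (rule word_act_eq_perm_apply)
    also have "\<dots> = negate_coord (wall_axis (perm_code g)) (perm_apply (perm_code g) (word_act (winv g) q))"
      by (rule perm_apply_gen_act_S3[OF perm_code_in_signed_perms])
    also have "perm_apply (perm_code g) (word_act (winv g) q) = q"
      by (metis word_act_winv(2) word_act_eq_perm_apply)
    finally show ?thesis .
  qed
  then show ?thesis
    by blast
qed

lemma wact_vertex:
  assumes v: "v \<in> verts True"
  shows "wact r v = (fst v, point_coset (fst v) (word_act r (vertex_point v)))"
proof -
  have sv: "snd v = point_coset (fst v) (vertex_point v)"
    using vertex_eq_point_coset[OF v] by (metis snd_conv)
  have "{w. \<exists>a \<in> snd v. geq True w (r @ a)} = point_coset (fst v) (word_act r (vertex_point v))"
  proof (rule set_eqI, rule iffI)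
    fix w
    assume "w \<in> {w. \<exists>a \<in> snd v. geq True w (r @ a)}"
    then show "w \<in> point_coset (fst v) (word_act r (vertex_point v))"
      using sv by (auto simp: point_coset_def coxeter_eq_iff_word_act_eq)
  next
    fix w
    assume w: "w \<in> point_coset (fst v) (word_act r (vertex_point v))"
    have "winv r @ w \<in> snd v"
      using w sv by (simp add: point_coset_def)
    moreover have "word_act w = word_act (r @ (winv r @ w))"
      by (auto simp: fun_eq_iff)
    ultimately show "w \<in> {w. \<exists>a \<in> snd v. geq True w (r @ a)}"
      by (auto simp: coxeter_eq_iff_word_act_eq)
  qed
  then show ?thesis
    by (simp add: wact_def)
qed

lemma point_coset_eqD:
  assumes "point_coset i (word_act g (base_point i)) = point_coset i q"
  shows "word_act g (base_point i) = q"
proof -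
  have "g \<in> point_coset i (word_act g (base_point i))"
    by (simp add: point_coset_def)
  then have "g \<in> point_coset i q"
    by (simp only: assms)
  then show ?thesis
    by (simp add: point_coset_def)
qed

lemma wact_fixes_vertex_iff:
  assumes v: "v \<in> verts True"
  shows "wact r v = v \<longleftrightarrow> word_act r (vertex_point v) = vertex_point v"
proof
  assume fixed: "wact r v = v"
  obtain g where "v = (fst v, point_coset (fst v) (word_act g (base_point (fst v))))"
    using v verts_True_iff by blast
  then have g: "vertex_point v = word_act g (base_point (fst v))"
    by (metis vertex_point_point_coset)
  have "point_coset (fst v) (word_act (r @ g) (base_point (fst v))) = point_coset (fst v) (vertex_point v)"
    using fixed wact_vertex[OF v] vertex_eq_point_coset[OF v] g by (metis word_act_append snd_conv)
  then have "word_act (r @ g) (base_point (fst v)) = vertex_point v"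
    by (rule point_coset_eqD)
  then show "word_act r (vertex_point v) = vertex_point v"
    using g by simp
next
  assume "word_act r (vertex_point v) = vertex_point v"
  then show "wact r v = v"
    using wact_vertex[OF v] vertex_eq_point_coset[OF v] by metis
qed

fun unit_point :: "axis \<Rightarrow> int \<Rightarrow> point" where
  "unit_point Axis1 e = (e, 0, 0)"
| "unit_point Axis2 e = (0, e, 0)"
| "unit_point Axis3 e = (0, 0, e)"

lemma base_point_coords:
  "\<forall>t \<in> set signed_perms. \<forall>i \<in> set [S1, S2, S3]. \<forall>j \<in> set [Axis1, Axis2, Axis3].
     coord j (perm_apply t (base_point i)) \<in> {-1, 0, 1}"
  by code_simp

lemma vertex_coord_range: "v \<in> verts True \<Longrightarrow> coord j (vertex_point v) \<in> {-1, 0, 1}"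
  using vertex_point_signed_perm base_point_coords gen_in_set axis_in_set by metis

lemma chamber_coord_sign:
  "\<forall>t \<in> set signed_perms. \<forall>j \<in> set [Axis1, Axis2, Axis3].
     (\<forall>i \<in> set [S1, S2, S3]. 0 \<le> coord j (perm_apply t (base_point i)))
   \<or> (\<forall>i \<in> set [S1, S2, S3]. coord j (perm_apply t (base_point i)) \<le> 0)"
  by code_simp

lemma simplex_coord_sign:
  assumes "\<sigma> \<in> CB3"
  shows "\<exists>s \<in> {1, -1}. \<forall>v \<in> \<sigma>. coord j (vertex_point v) \<in> {0, s}"
proof -
  obtain t where t: "t \<in> set signed_perms" "\<forall>v \<in> \<sigma>. perm_apply t (base_point (fst v)) = vertex_point v"
    and \<sigma>: "\<sigma> \<subseteq> verts True"
    using assms by (auto simp: CB3_iff)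
  have range: "coord j (vertex_point v) \<in> {-1, 0, 1}" if "v \<in> \<sigma>" for v
    using that \<sigma> vertex_coord_range by blast
  from chamber_coord_sign t(1) axis_in_set
  have "(\<forall>v \<in> \<sigma>. 0 \<le> coord j (vertex_point v)) \<or> (\<forall>v \<in> \<sigma>. coord j (vertex_point v) \<le> 0)"
    using t(2) gen_in_set by metis
  then show ?thesis
    using range by fastforce
qed

definition face_centre :: "axis \<Rightarrow> int \<Rightarrow> vertex" where
  "face_centre j e = (S1, point_coset S1 (unit_point j e))"

lemma unit_point_in_orbit:
  "\<forall>j \<in> set [Axis1, Axis2, Axis3]. \<forall>e \<in> {1, -1}.
     \<exists>t \<in> set signed_perms. perm_apply t (base_point S1) = unit_point j e"
  by code_simp

lemma face_centre:
  assumes "e \<in> {1, -1}"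
  shows "face_centre j e \<in> verts True" "vertex_point (face_centre j e) = unit_point j e"
proof -
  obtain t where "t \<in> set signed_perms" "perm_apply t (base_point S1) = unit_point j e"
    using unit_point_in_orbit axis_in_set assms by blast
  then show "face_centre j e \<in> verts True" "vertex_point (face_centre j e) = unit_point j e"
    unfolding face_centre_def using signed_perm_vertex by metis+
qed

lemma coord_unit_point [simp]: "coord j (unit_point j e) = e"
  by (cases j) auto

lemma chamber_recentre:
  "\<forall>t \<in> set signed_perms. \<forall>j \<in> set [Axis1, Axis2, Axis3]. \<forall>e \<in> {1, -1}.
     (\<exists>i \<in> set [S1, S2, S3]. coord j (perm_apply t (base_point i)) = e) \<longrightarrow>
     (\<exists>t' \<in> set signed_perms. perm_apply t' (base_point S1) = unit_point j e \<and>
        (\<forall>i \<in> set [S1, S2, S3]. coord j (perm_apply t (base_point i)) = e \<longrightarrow>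
           perm_apply t' (base_point i) = perm_apply t (base_point i)))"
  by code_simp

lemma face_vertices_centred_chamber:
  assumes "\<sigma> \<in> CB3" "e \<in> {1, -1}" "v0 \<in> \<sigma>" "coord j (vertex_point v0) = e"
  shows "\<exists>t \<in> set signed_perms. perm_apply t (base_point S1) = unit_point j e \<and>
    (\<forall>v \<in> \<sigma>. coord j (vertex_point v) = e \<longrightarrow> perm_apply t (base_point (fst v)) = vertex_point v)"
proof -
  obtain t where t: "t \<in> set signed_perms" "\<forall>v \<in> \<sigma>. perm_apply t (base_point (fst v)) = vertex_point v"
    using assms(1) by (auto simp: CB3_iff)
  have "\<exists>i \<in> set [S1, S2, S3]. coord j (perm_apply t (base_point i)) = e"
    using assms(3,4) t(2) gen_in_set by metis
  with chamber_recentre t(1) axis_in_set assms(2)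
  obtain t' where "t' \<in> set signed_perms" "perm_apply t' (base_point S1) = unit_point j e"
    "\<forall>i \<in> set [S1, S2, S3]. coord j (perm_apply t (base_point i)) = e \<longrightarrow>
       perm_apply t' (base_point i) = perm_apply t (base_point i)"
    by blast
  then show ?thesis
    using t(2) gen_in_set by metis
qed

lemma insert_face_centre_CB3:
  assumes "\<sigma> \<in> CB3" "e \<in> {1, -1}" "\<tau> \<subseteq> \<sigma>" "\<tau> \<noteq> {}" "\<forall>v \<in> \<tau>. coord j (vertex_point v) = e"
  shows "insert (face_centre j e) \<tau> \<in> CB3"
proof -
  obtain v0 where "v0 \<in> \<tau>"
    using assms(4) by blast
  then obtain t where t: "t \<in> set signed_perms" "perm_apply t (base_point S1) = unit_point j e"
    "\<forall>v \<in> \<sigma>. coord j (vertex_point v) = e \<longrightarrow> perm_apply t (base_point (fst v)) = vertex_point v"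
    using face_vertices_centred_chamber[OF assms(1,2)] assms(3,5) by blast
  have "\<forall>v \<in> insert (face_centre j e) \<tau>. perm_apply t (base_point (fst v)) = vertex_point v"
    using t(2,3) assms(3,5) face_centre[OF assms(2)] by (auto simp: face_centre_def)
  moreover have "finite \<tau>" "\<tau> \<subseteq> verts True"
    using assms(1,3) by (auto simp: CB3_iff intro: finite_subset)
  ultimately show ?thesis
    using t(1) face_centre[OF assms(2)] unfolding CB3_iff by blast
qed

section \<open>The complement of a wall\<close>

text \<open>The \<open>j\<close>-th coordinate of the map from the realisation of \<open>C(B_3)\<close> to the boundary of the cube
  that is affine on simplices.\<close>

definition height :: "axis \<Rightarrow> (vertex \<Rightarrow> real) \<Rightarrow> real" where
  "height j p = (\<Sum>v \<in> verts True. p v * of_int (coord j (vertex_point v)))"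

lemma CB3_subset_verts: "\<sigma> \<in> CB3 \<Longrightarrow> \<sigma> \<subseteq> verts True"
  by (simp add: CB3_iff)

lemma height_csimp:
  "\<sigma> \<subseteq> verts True \<Longrightarrow> p \<in> csimp \<sigma> \<Longrightarrow> height j p = (\<Sum>v \<in> \<sigma>. p v * of_int (coord j (vertex_point v)))"
  unfolding height_def
  by (rule sum.mono_neutral_right[OF finite_verts]) (auto simp: csimp_def)

lemma cplx_face:
  assumes "\<sigma> \<in> cplx cox" "\<tau> \<subseteq> \<sigma>" "\<tau> \<noteq> {}"
  shows "\<tau> \<in> cplx cox"
proof -
  have \<sigma>: "finite \<sigma>" "\<sigma> \<subseteq> verts cox" "\<Inter> (snd ` \<sigma>) \<noteq> {}"
    using assms(1) by (simp_all add: cplx_def)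
  have "\<Inter> (snd ` \<sigma>) \<subseteq> \<Inter> (snd ` \<tau>)"
    using assms(2) by (rule Inter_anti_mono[OF image_mono])
  then show ?thesis
    using \<sigma> assms(2,3) finite_subset[OF assms(2)] by (auto simp: cplx_def)
qed

lemma realizeI: "\<sigma> \<in> K \<Longrightarrow> p \<in> csimp \<sigma> \<Longrightarrow> p \<in> realize K"
  by (auto simp: realize_def)

lemma height_on_wall:
  assumes r: "word_act r = negate_coord j" and p: "p \<in> realize (fixcplx r)"
  shows "height j p = 0"
proof -
  from p obtain \<tau> where \<tau>: "\<tau> \<in> CB3" "\<forall>v \<in> \<tau>. wact r v = v" and p: "p \<in> csimp \<tau>"
    by (auto simp: realize_def fixcplx_def)
  have "coord j (vertex_point v) = 0" if "v \<in> \<tau>" for v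
    using \<tau> that CB3_subset_verts wact_fixes_vertex_iff negate_coord_eq_self_iff r by (metis subsetD)
  then show ?thesis
    using height_csimp[OF CB3_subset_verts[OF \<tau>(1)] p] by simp
qed

lemma csimp_support:
  assumes \<sigma>: "\<sigma> \<in> CB3" and p: "p \<in> csimp \<sigma>"
  shows "{v \<in> \<sigma>. p v \<noteq> 0} \<in> CB3" "p \<in> csimp {v \<in> \<sigma>. p v \<noteq> 0}"
proof -
  define \<tau> where "\<tau> = {v \<in> \<sigma>. p v \<noteq> 0}"
  have p0: "\<forall>v. v \<notin> \<sigma> \<longrightarrow> p v = 0" and pnn: "\<forall>v \<in> \<sigma>. 0 \<le> p v" and p1: "sum p \<sigma> = 1"
    using p by (auto simp: csimp_def)
  have "\<tau> \<subseteq> \<sigma>"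
    by (auto simp: \<tau>_def)
  have "finite \<sigma>"
    using \<sigma> by (simp add: CB3_iff)
  then have "sum p \<tau> = 1"
    using p1 sum.mono_neutral_left[OF _ \<open>\<tau> \<subseteq> \<sigma>\<close>, of p] by (auto simp: \<tau>_def)
  then have "\<tau> \<noteq> {}"
    by auto
  then show "{v \<in> \<sigma>. p v \<noteq> 0} \<in> CB3"
    using cplx_face \<sigma> \<open>\<tau> \<subseteq> \<sigma>\<close> unfolding \<tau>_def by blast
  have "p \<in> csimp \<tau>"
    using p0 pnn \<open>sum p \<tau> = 1\<close> by (auto simp: csimp_def \<tau>_def)
  then show "p \<in> csimp {v \<in> \<sigma>. p v \<noteq> 0}"
    by (simp only: \<tau>_def)
qed

text \<open>All vertices of a simplex lie on the same side of each coordinate plane.\<close>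

lemma height_nonzero:
  assumes \<sigma>: "\<sigma> \<in> CB3" and p: "p \<in> csimp \<sigma>"
    and v0: "v0 \<in> \<sigma>" "p v0 \<noteq> 0" "coord j (vertex_point v0) \<noteq> 0"
  shows "height j p \<noteq> 0"
proof -
  have sub: "\<sigma> \<subseteq> verts True" and fin: "finite \<sigma>"
    using \<sigma> by (auto simp: CB3_iff)
  obtain s where s: "s \<in> {1, -1}" "\<forall>v \<in> \<sigma>. coord j (vertex_point v) \<in> {0, s}"
    using simplex_coord_sign[OF \<sigma>] by blast
  have "of_int s * height j p = (\<Sum>v \<in> \<sigma>. p v * of_int (s * coord j (vertex_point v)))"
    by (simp add: height_csimp[OF sub p] sum_distrib_left mult_ac)
  also have "\<dots> > 0"
  proof (rule sum_pos2[OF fin v0(1)])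
    have "0 \<le> p v0"
      using v0(1) p by (simp add: csimp_def)
    moreover have "s * coord j (vertex_point v0) = 1"
      using v0 s by auto
    ultimately show "0 < p v0 * of_int (s * coord j (vertex_point v0))"
      using v0(2) by simp
    show "0 \<le> p v * of_int (s * coord j (vertex_point v))" if "v \<in> \<sigma>" for v
    proof -
      have "0 \<le> s * coord j (vertex_point v)"
        using that s by auto
      moreover have "0 \<le> p v"
        using that p by (simp add: csimp_def)
      ultimately show ?thesis
        by (metis mult_nonneg_nonneg of_int_0_le_iff)
    qed
  qed
  finally show ?thesis
    by auto
qed

lemma height_off_wall:
  assumes r: "word_act r = negate_coord j"
    and p: "p \<in> realize CB3" "p \<notin> realize (fixcplx r)"
  shows "height j p \<noteq> 0"
proof -
  from p obtain \<sigma> where \<sigma>: "\<sigma> \<in> CB3" "p \<in> csimp \<sigma>"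
    by (auto simp: realize_def)
  let ?\<tau> = "{v \<in> \<sigma>. p v \<noteq> 0}"
  have "\<exists>v0 \<in> ?\<tau>. coord j (vertex_point v0) \<noteq> 0"
  proof (rule ccontr)
    assume none: "\<not> ?thesis"
    have "wact r v = v" if "v \<in> ?\<tau>" for v
    proof -
      have "v \<in> verts True" "coord j (vertex_point v) = 0"
        using that none CB3_subset_verts[OF \<sigma>(1)] by blast+
      then show ?thesis
        by (simp add: wact_fixes_vertex_iff r negate_coord_eq_self_iff)
    qed
    then have "?\<tau> \<in> fixcplx r"
      using csimp_support(1)[OF \<sigma>] by (simp add: fixcplx_def)
    then have "p \<in> realize (fixcplx r)"
      using csimp_support(2)[OF \<sigma>] by (rule realizeI)
    then show False
      using p(2) by blast
  qed
  then show ?thesis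
    using height_nonzero[OF \<sigma>] by blast
qed

lemma continuous_on_height: "continuous_on S (height j)"
  unfolding height_def
  by (intro continuous_on_sum continuous_on_mult_right
      continuous_on_subset[OF continuous_on_product_coordinates] subset_UNIV)

definition mix :: "('a \<Rightarrow> real) \<Rightarrow> ('a \<Rightarrow> real) \<Rightarrow> real \<Rightarrow> 'a \<Rightarrow> real" where
  "mix p q t = (\<lambda>v. (1 - t) * p v + t * q v)"

lemma mix_0 [simp]: "mix p q 0 = p" and mix_1 [simp]: "mix p q 1 = q"
  by (auto simp: mix_def)

lemma mix_csimp: "p \<in> csimp \<sigma> \<Longrightarrow> q \<in> csimp \<sigma> \<Longrightarrow> 0 \<le> t \<Longrightarrow> t \<le> 1 \<Longrightarrow> mix p q t \<in> csimp \<sigma>"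
  by (auto simp: csimp_def mix_def sum.distrib sum_distrib_left[symmetric])

lemma height_mix: "height j (mix p q t) = (1 - t) * height j p + t * height j q"
proof -
  have "mix p q t v * of_int (coord j (vertex_point v))
      = (1 - t) * (p v * of_int (coord j (vertex_point v))) + t * (q v * of_int (coord j (vertex_point v)))" for v
    by (simp add: mix_def distrib_right)
  then show ?thesis
    unfolding height_def by (simp add: sum.distrib sum_distrib_left)
qed

lemma connected_mix_image: "connected (mix p q ` {0..1})"
proof -
  have "continuous_on {0..1} (mix p q)"
    unfolding mix_def by (intro continuous_on_coordinatewise_then_product continuous_intros)
  then show ?thesis
    using connected_continuous_image connected_Icc by blast
qed

definition vertex_delta :: "'a \<Rightarrow> 'a \<Rightarrow> real" where
  "vertex_delta v = (\<lambda>w. if w = v then 1 else 0)"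

lemma vertex_delta_csimp: "finite \<sigma> \<Longrightarrow> v \<in> \<sigma> \<Longrightarrow> vertex_delta v \<in> csimp \<sigma>"
  by (auto simp: csimp_def vertex_delta_def)

lemma height_vertex_delta: "v \<in> verts True \<Longrightarrow> height j (vertex_delta v) = of_int (coord j (vertex_point v))"
proof -
  have "vertex_delta v w * of_int (coord j (vertex_point w))
      = (if w = v then of_int (coord j (vertex_point w)) else 0)" for w
    by (simp add: vertex_delta_def)
  then show "v \<in> verts True \<Longrightarrow> ?thesis"
    unfolding height_def by (simp add: finite_verts)
qed

definition positive_side :: "axis \<Rightarrow> int \<Rightarrow> (vertex \<Rightarrow> real) set" where
  "positive_side j e = {p \<in> realize CB3. 0 < of_int e * height j p}"

lemma mix_in_positive_side:
  assumes "\<sigma> \<in> CB3" "p \<in> csimp \<sigma>" "q \<in> csimp \<sigma>"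
    and "0 < of_int e * height j p" "0 < of_int e * height j q" and t: "t \<in> {0..1}"
  shows "mix p q t \<in> positive_side j e"
proof -
  have "mix p q t \<in> realize CB3"
    using assms mix_csimp realizeI by fastforce
  moreover have "of_int e * height j (mix p q t) = (1 - t) * (of_int e * height j p) + t * (of_int e * height j q)"
    by (simp add: height_mix algebra_simps)
  moreover have "0 < (1 - t) * (of_int e * height j p) + t * (of_int e * height j q)"
    using assms(4,5) t by (cases "t = 0") (auto intro: add_nonneg_pos)
  ultimately show ?thesis
    by (simp add: positive_side_def)
qed

lemma signed_height_le_face_mass:
  assumes "\<sigma> \<in> CB3" "p \<in> csimp \<sigma>" "e \<in> {1, -1}"
  shows "of_int e * height j p \<le> sum p {v \<in> \<sigma>. coord j (vertex_point v) = e}"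
proof -
  have \<sigma>: "\<sigma> \<subseteq> verts True" "finite \<sigma>"
    using assms(1) by (auto simp: CB3_iff)
  have "of_int e * height j p = (\<Sum>v \<in> \<sigma>. p v * of_int (e * coord j (vertex_point v)))"
    by (simp add: height_csimp[OF \<sigma>(1) assms(2)] sum_distrib_left mult_ac)
  also have "\<dots> \<le> (\<Sum>v \<in> \<sigma>. if coord j (vertex_point v) = e then p v else 0)"
  proof (rule sum_mono)
    fix v
    assume v: "v \<in> \<sigma>"
    have "coord j (vertex_point v) \<in> {-1, 0, 1}"
      using v \<sigma>(1) vertex_coord_range by blast
    moreover have "0 \<le> p v"
      using v assms(2) by (simp add: csimp_def)
    ultimately show "p v * of_int (e * coord j (vertex_point v)) \<le> (if coord j (vertex_point v) = e then p v else 0)"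
      using assms(3) by (auto simp: mult_le_0_iff)
  qed
  also have "\<dots> = sum p {v \<in> \<sigma>. coord j (vertex_point v) = e}"
    by (simp add: sum.If_cases \<sigma>(2) Int_def)
  finally show ?thesis .
qed

text \<open>Renormalising the part of a point of positive height that lies on the face \<open>x_j = e\<close> gives
  a point of height \<open>e\<close> in a simplex containing the face centre.\<close>

lemma positive_part_on_face:
  assumes \<sigma>: "\<sigma> \<in> CB3" and p: "p \<in> csimp \<sigma>" and e: "e \<in> {1, -1}" and pos: "0 < of_int e * height j p"
  obtains q \<tau> where "q \<in> csimp \<sigma>" "\<tau> \<in> CB3" "q \<in> csimp \<tau>" "face_centre j e \<in> \<tau>" "height j q = of_int e"
proof -
  have sub: "\<sigma> \<subseteq> verts True" and fin: "finite \<sigma>"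
    using \<sigma> by (auto simp: CB3_iff)
  have pnn: "\<forall>v \<in> \<sigma>. 0 \<le> p v"
    using p by (simp add: csimp_def)
  define \<phi> where "\<phi> = {v \<in> \<sigma>. coord j (vertex_point v) = e}"
  define m where "m = sum p \<phi>"
  have "\<phi> \<subseteq> \<sigma>" "finite \<phi>"
    using fin by (auto simp: \<phi>_def)
  have "0 < m"
    using signed_height_le_face_mass[OF \<sigma> p e, of j] pos unfolding m_def \<phi>_def by linarith
  then have "\<phi> \<noteq> {}"
    by (auto simp: m_def)
  define q where "q = (\<lambda>v. if v \<in> \<phi> then p v / m else 0)"
  have q1: "sum q \<phi> = 1"
    using \<open>0 < m\<close> by (simp add: q_def m_def sum_divide_distrib[symmetric])
  have qnn: "0 \<le> q v" for v
    using pnn \<open>0 < m\<close> \<open>\<phi> \<subseteq> \<sigma>\<close> by (auto simp: q_def)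
  have "sum q \<sigma> = sum q \<phi>"
    by (rule sum.mono_neutral_right[OF fin \<open>\<phi> \<subseteq> \<sigma>\<close>]) (auto simp: q_def)
  moreover have "\<forall>v. v \<notin> \<sigma> \<longrightarrow> q v = 0"
    using \<open>\<phi> \<subseteq> \<sigma>\<close> by (auto simp: q_def)
  ultimately have q\<sigma>: "q \<in> csimp \<sigma>"
    using q1 qnn by (simp add: csimp_def)
  define \<tau> where "\<tau> = insert (face_centre j e) \<phi>"
  have "sum q \<tau> = sum q \<phi>"
    using \<open>finite \<phi>\<close> by (cases "face_centre j e \<in> \<phi>") (auto simp: \<tau>_def q_def insert_absorb)
  moreover have "\<forall>v. v \<notin> \<tau> \<longrightarrow> q v = 0"
    by (auto simp: q_def \<tau>_def)
  ultimately have q\<tau>: "q \<in> csimp \<tau>"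
    using q1 qnn by (simp add: csimp_def)
  have "\<tau> \<in> CB3"
    unfolding \<tau>_def using insert_face_centre_CB3[OF \<sigma> e \<open>\<phi> \<subseteq> \<sigma>\<close> \<open>\<phi> \<noteq> {}\<close>] by (simp add: \<phi>_def)
  have "height j q = (\<Sum>v \<in> \<sigma>. q v * of_int e)"
    unfolding height_csimp[OF sub q\<sigma>] by (rule sum.cong) (auto simp: q_def \<phi>_def)
  also have "\<dots> = of_int e"
    using q\<sigma> by (simp add: csimp_def sum_distrib_right[symmetric])
  finally show ?thesis
    using that q\<sigma> \<open>\<tau> \<in> CB3\<close> q\<tau> by (simp add: \<tau>_def)
qed

lemma positive_side_star:
  assumes p: "p \<in> positive_side j e" and e: "e \<in> {1, -1}"
  shows "\<exists>S. connected S \<and> p \<in> S \<and> vertex_delta (face_centre j e) \<in> S \<and> S \<subseteq> positive_side j e"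
proof -
  let ?c = "vertex_delta (face_centre j e)"
  obtain \<sigma> where \<sigma>: "\<sigma> \<in> CB3" "p \<in> csimp \<sigma>" and pos: "0 < of_int e * height j p"
    using p by (auto simp: positive_side_def realize_def)
  obtain q \<tau> where q: "q \<in> csimp \<sigma>" "\<tau> \<in> CB3" "q \<in> csimp \<tau>" "face_centre j e \<in> \<tau>" "height j q = of_int e"
    using positive_part_on_face[OF \<sigma> e pos] by blast
  have ee: "of_int e * of_int e = (1 :: real)"
    using e by auto
  have c: "?c \<in> csimp \<tau>" "height j ?c = of_int e"
    using q(2,4) face_centre[OF e] by (auto simp: CB3_iff vertex_delta_csimp height_vertex_delta)
  define S where "S = mix p q ` {0..1} \<union> mix q ?c ` {0..1}"
  have "q \<in> mix p q ` {0..1} \<inter> mix q ?c ` {0..1}"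
    using image_eqI[of q "mix p q" 1] image_eqI[of q "mix q ?c" 0] by simp
  then have "connected S"
    unfolding S_def by (intro connected_Un connected_mix_image) blast
  moreover have "p \<in> S" "?c \<in> S"
    using image_eqI[of p "mix p q" 0] image_eqI[of ?c "mix q ?c" 1] by (auto simp: S_def)
  moreover have "S \<subseteq> positive_side j e"
  proof -
    have hq: "0 < of_int e * height j q" and hc: "0 < of_int e * height j ?c"
      using q(5) c(2) ee by simp_all
    show ?thesis
      using mix_in_positive_side[OF \<sigma> q(1) pos hq] mix_in_positive_side[OF q(2,3) c(1) hq hc]
      by (auto simp: S_def)
  qed
  ultimately show ?thesis
    by blast
qed

lemma connected_positive_side:
  assumes "e \<in> {1, -1}"
  shows "connected (positive_side j e)"
proof -
  let ?\<S> = "{S. connected S \<and> vertex_delta (face_centre j e) \<in> S \<and> S \<subseteq> positive_side j e}"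
  have "positive_side j e = \<Union> ?\<S>"
  proof
    show "positive_side j e \<subseteq> \<Union> ?\<S>"
    proof
      fix p
      assume "p \<in> positive_side j e"
      then obtain S where "connected S" "p \<in> S" "vertex_delta (face_centre j e) \<in> S" "S \<subseteq> positive_side j e"
        using positive_side_star[OF _ assms] by blast
      then show "p \<in> \<Union> ?\<S>"
        by blast
    qed
  qed blast
  moreover have "connected (\<Union> ?\<S>)"
    by (rule connected_Union) auto
  ultimately show ?thesis
    by simp
qed

lemma csimp_subset_positive_side_iff:
  assumes \<sigma>: "\<sigma> \<in> CB3" and e: "e \<in> {1, -1}"
  shows "csimp \<sigma> \<subseteq> positive_side j e \<longleftrightarrow> (\<forall>v \<in> \<sigma>. coord j (vertex_point v) = e)"
proof
  assume sub: "csimp \<sigma> \<subseteq> positive_side j e"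
  show "\<forall>v \<in> \<sigma>. coord j (vertex_point v) = e"
  proof
    fix v
    assume v: "v \<in> \<sigma>"
    have "v \<in> verts True" "finite \<sigma>"
      using v \<sigma> by (auto simp: CB3_iff)
    then have "vertex_delta v \<in> positive_side j e"
      using sub vertex_delta_csimp[OF _ v] by blast
    then have "0 < of_int e * (of_int (coord j (vertex_point v)) :: real)"
      using height_vertex_delta[OF \<open>v \<in> verts True\<close>] by (simp add: positive_side_def)
    then have "0 < e * coord j (vertex_point v)"
      by (metis of_int_0_less_iff of_int_mult)
    then show "coord j (vertex_point v) = e"
      using vertex_coord_range[OF \<open>v \<in> verts True\<close>, of j] e by auto
  qed
next
  assume face: "\<forall>v \<in> \<sigma>. coord j (vertex_point v) = e"
  show "csimp \<sigma> \<subseteq> positive_side j e"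
  proof
    fix p
    assume p: "p \<in> csimp \<sigma>"
    have "height j p = (\<Sum>v \<in> \<sigma>. p v * of_int e)"
      using height_csimp[OF CB3_subset_verts[OF \<sigma>] p] face by simp
    also have "\<dots> = of_int e"
      using p by (simp add: csimp_def sum_distrib_right[symmetric])
    finally have "of_int e * height j p = 1"
      using e by auto
    then show "p \<in> positive_side j e"
      using p \<sigma> by (simp add: positive_side_def realizeI)
  qed
qed

context
  fixes r j
  assumes r: "word_act r = negate_coord j"
begin

lemma component_in_positive_side:
  assumes x: "x \<in> realize CB3 - realize (fixcplx r)"
  defines "e \<equiv> if 0 < height j x then 1 else -1 :: int"
  shows "connected_component_set (realize CB3 - realize (fixcplx r)) x \<subseteq> positive_side j e"
proof
  let ?X = "realize CB3 - realize (fixcplx r)"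
  let ?C = "connected_component_set ?X x"
  have nz: "height j p \<noteq> 0" if "p \<in> ?X" for p
    using that height_off_wall[OF r] by blast
  have "height j x \<noteq> 0"
    using nz x by blast
  fix p
  assume p: "p \<in> ?C"
  then have pX: "p \<in> ?X"
    using connected_component_subset by blast
  have conn: "connected (height j ` ?C)"
    by (rule connected_continuous_image[OF continuous_on_height connected_connected_component])
  have "0 \<notin> height j ` ?C"
    using nz connected_component_subset by fastforce
  then have no_crossing: "\<not> (a \<le> 0 \<and> 0 \<le> b)" if "a \<in> height j ` ?C" "b \<in> height j ` ?C" for a b
    using conn that unfolding connected_iff_interval by blast
  have "height j x \<in> height j ` ?C" "height j p \<in> height j ` ?C"
    using x p by auto
  then have "0 < height j x \<longleftrightarrow> 0 < height j p"
    using no_crossing \<open>height j x \<noteq> 0\<close> nz[OF pX] by fastforce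
  then have "0 < of_int e * height j p"
    using \<open>height j x \<noteq> 0\<close> nz[OF pX] by (auto simp: e_def)
  then show "p \<in> positive_side j e"
    using pX by (simp add: positive_side_def)
qed

lemma positive_side_in_component:
  assumes x: "x \<in> positive_side j e" and e: "e \<in> {1, -1}"
  shows "positive_side j e \<subseteq> connected_component_set (realize CB3 - realize (fixcplx r)) x"
proof (rule connected_component_maximal[OF x connected_positive_side[OF e]])
  show "positive_side j e \<subseteq> realize CB3 - realize (fixcplx r)"
    using height_on_wall[OF r] by (force simp: positive_side_def)
qed

theorem falk_component_eq_face:
  assumes x: "x \<in> realize CB3 - realize (fixcplx r)"
  shows "\<exists>e \<in> {1, -1}. {\<sigma> \<in> CB3. csimp \<sigma> \<subseteq> connected_component_set (realize CB3 - realize (fixcplx r)) x}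
    = {\<sigma> \<in> CB3. \<forall>v \<in> \<sigma>. coord j (vertex_point v) = e}"
proof -
  define e :: int where "e = (if 0 < height j x then 1 else -1)"
  have e: "e \<in> {1, -1}"
    by (simp add: e_def)
  have C: "connected_component_set (realize CB3 - realize (fixcplx r)) x = positive_side j e"
    using component_in_positive_side[OF x] positive_side_in_component[OF _ e] connected_component_refl x
    unfolding e_def by blast
  show ?thesis
    using csimp_subset_positive_side_iff[OF _ e] e unfolding C by blast
qed

end

section \<open>Spaces isometric to convex subsets of the plane\<close>

lemma norm_of_real_combination_sq:
  fixes u v :: complex
  shows "(cmod (of_real a * u + of_real b * v))\<^sup>2
    = a\<^sup>2 * (cmod u)\<^sup>2 + b\<^sup>2 * (cmod v)\<^sup>2 + a * b * ((cmod u)\<^sup>2 + (cmod v)\<^sup>2 - (cmod (u - v))\<^sup>2)"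
  by (simp only: cmod_power2) (simp add: power2_eq_square algebra_simps)

definition tri_point :: "complex \<Rightarrow> complex \<Rightarrow> complex \<Rightarrow> real \<times> real \<Rightarrow> complex" where
  "tri_point x y z c = z + of_real (fst c) * (x - z) + of_real (snd c) * (y - z)"

lemma tri_point_vertices:
  "tri_point x y z (1, 0) = x" "tri_point x y z (0, 1) = y" "tri_point x y z (0, 0) = z"
  by (simp_all add: tri_point_def)

lemma tri_point_segment:
  "tri_point x y z c + of_real l * (tri_point x y z c' - tri_point x y z c) = tri_point x y z ((1 - l) *\<^sub>R c + l *\<^sub>R c')"
  by (simp add: tri_point_def algebra_simps)

lemma tri_point_dist_congruent:
  assumes "cmod (x - y) = cmod (X - Y)" "cmod (y - z) = cmod (Y - Z)" "cmod (z - x) = cmod (Z - X)"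
  shows "cmod (tri_point x y z c - tri_point x y z c') = cmod (tri_point X Y Z c - tri_point X Y Z c')"
proof -
  let ?a = "fst c - fst c'" and ?b = "snd c - snd c'"
  have diff: "tri_point x y z c - tri_point x y z c' = of_real ?a * (x - z) + of_real ?b * (y - z)" for x y z
    by (simp add: tri_point_def algebra_simps)
  have "cmod (x - z) = cmod (X - Z)" "cmod ((x - z) - (y - z)) = cmod ((X - Z) - (Y - Z))"
    using assms by (simp_all add: norm_minus_commute)
  then have "(cmod (tri_point x y z c - tri_point x y z c'))\<^sup>2 = (cmod (tri_point X Y Z c - tri_point X Y Z c'))\<^sup>2"
    unfolding diff norm_of_real_combination_sq using assms(2) by simp
  then show ?thesis
    by (simp add: power2_eq_iff_nonneg)
qed

lemma point_on_segment_eq: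
  fixes u a b :: complex
  assumes L: "cmod (a - b) = L" and s: "0 \<le> s" "s \<le> L"
    and ua: "cmod (u - a) = s" and ub: "cmod (u - b) = L - s"
  shows "u = a + of_real (s / L) * (b - a)"
proof (cases "L = 0")
  case True
  then show ?thesis
    using ua s by simp
next
  case False
  then have "L > 0"
    using s by linarith
  have "norm ((u - a) + (b - u)) = norm (u - a) + norm (b - u)"
    using L ua ub by (simp add: norm_minus_commute)
  then have "norm (u - a) *\<^sub>R (b - u) = norm (b - u) *\<^sub>R (u - a)"
    by (simp only: norm_triangle_eq)
  then have "of_real s * (b - u) = of_real (L - s) * (u - a)"
    using ua ub by (simp add: norm_minus_commute scaleR_conv_of_real)
  then have "of_real L * u = of_real s * b + of_real (L - s) * a"
    by (simp add: algebra_simps)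
  then show ?thesis
    using \<open>L > 0\<close> by (simp add: field_simps)
qed

context
  fixes X :: "'a set" and d :: "'a \<Rightarrow> 'a \<Rightarrow> real" and f :: "'a \<Rightarrow> complex" and S :: "complex set"
  assumes convex: "convex S" and bij: "bij_betw f X S"
    and dist_eq: "\<And>x y. x \<in> X \<Longrightarrow> y \<in> X \<Longrightarrow> d x y = cmod (f x - f y)"
begin

lemma isometric_metric_on: "metric_on X d"
  unfolding metric_on_def
proof (intro conjI ballI)
  fix x y
  assume x: "x \<in> X" and y: "y \<in> X"
  show "0 \<le> d x y" "d x y = d y x"
    using x y by (simp_all add: dist_eq norm_minus_commute)
  show "(d x y = 0) = (x = y)"
    using x y bij by (auto simp: dist_eq bij_betw_def inj_on_eq_iff)
next
  fix x y z
  assume "x \<in> X" "y \<in> X" "z \<in> X"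
  then show "d x z \<le> d x y + d y z"
    using norm_triangle_ineq[of "f x - f y" "f y - f z"] by (simp add: dist_eq)
qed

lemma isometric_segment_preimage:
  assumes a: "a \<in> X" and b: "b \<in> X" and l: "0 \<le> l" "l \<le> 1"
  shows "inv_into X f (f a + of_real l * (f b - f a)) \<in> X"
    and "f (inv_into X f (f a + of_real l * (f b - f a))) = f a + of_real l * (f b - f a)"
proof -
  have "f a \<in> S" "f b \<in> S"
    using a b bij by (auto simp: bij_betw_def)
  moreover have "f a + of_real l * (f b - f a) = (1 - l) *\<^sub>R f a + l *\<^sub>R f b"
    by (simp add: scaleR_conv_of_real algebra_simps)
  ultimately have "f a + of_real l * (f b - f a) \<in> f ` X"
    using convex l bij unfolding convex_alt bij_betw_def by simp
  then show "inv_into X f (f a + of_real l * (f b - f a)) \<in> X"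
    and "f (inv_into X f (f a + of_real l * (f b - f a))) = f a + of_real l * (f b - f a)"
    by (simp_all add: inv_into_into f_inv_into_f)
qed

lemma isometric_geodesic_exists:
  assumes a: "a \<in> X" and b: "b \<in> X"
  shows "\<exists>\<gamma>. geodesic_path X d \<gamma> a b"
proof -
  define L where "L = d a b"
  have L: "L = cmod (f a - f b)"
    using a b by (simp add: L_def dist_eq)
  define g where "g s = f a + of_real (s / L) * (f b - f a)" for s
  define \<gamma> where "\<gamma> s = inv_into X f (g s)" for s
  have \<gamma>: "\<gamma> s \<in> X" "f (\<gamma> s) = g s" if "s \<in> {0..L}" for s
  proof -
    have "0 \<le> s / L" "s / L \<le> 1"
      using that by (auto simp: divide_le_eq_1)
    then show "\<gamma> s \<in> X" "f (\<gamma> s) = g s"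
      unfolding \<gamma>_def g_def by (rule isometric_segment_preimage[OF a b])+
  qed
  have inv: "inv_into X f (f x) = x" if "x \<in> X" for x
    using bij that by (simp add: bij_betw_def inv_into_f_f)
  have "geodesic_path X d \<gamma> a b"
    unfolding geodesic_path_def L_def[symmetric]
  proof (intro conjI ballI)
    show "\<gamma> 0 = a"
      using inv[OF a] by (simp add: \<gamma>_def g_def)
    show "\<gamma> L = b"
    proof (cases "L = 0")
      case True
      then have "a = b"
        using a b isometric_metric_on by (simp add: L_def metric_on_def)
      then show ?thesis
        using inv[OF a] True by (simp add: \<gamma>_def g_def)
    qed (use inv[OF b] in \<open>simp add: \<gamma>_def g_def\<close>)
    fix s t
    assume s: "s \<in> {0..L}" and t: "t \<in> {0..L}"
    show "\<gamma> s \<in> X"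
      using \<gamma>(1)[OF s] .
    have "g s - g t = of_real ((s - t) / L) * (f b - f a)"
      by (simp add: g_def algebra_simps diff_divide_distrib)
    then have "d (\<gamma> s) (\<gamma> t) = \<bar>(s - t) / L\<bar> * L"
      using \<gamma>[OF s] \<gamma>[OF t] L by (simp only: dist_eq norm_mult norm_of_real norm_minus_commute)
    also have "\<dots> = \<bar>s - t\<bar>"
      using s t by (cases "L = 0") (auto simp: abs_divide)
    finally show "d (\<gamma> s) (\<gamma> t) = \<bar>s - t\<bar>" .
  qed
  then show ?thesis
    by blast
qed

lemma isometric_geodesic_image:
  assumes \<gamma>: "geodesic_path X d \<gamma> a b" and a: "a \<in> X" and b: "b \<in> X" and s: "s \<in> {0..d a b}"
  shows "f (\<gamma> s) = f a + of_real (s / d a b) * (f b - f a)"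
proof (rule point_on_segment_eq)
  let ?L = "d a b"
  have "0 \<le> ?L"
    using a b by (simp add: dist_eq)
  have "\<gamma> s \<in> X" "\<gamma> 0 = a" "\<gamma> ?L = b"
    and iso: "\<forall>s \<in> {0..?L}. \<forall>t \<in> {0..?L}. d (\<gamma> s) (\<gamma> t) = \<bar>s - t\<bar>"
    using \<gamma> s by (auto simp: geodesic_path_def)
  moreover have "d (\<gamma> s) (\<gamma> 0) = s" "d (\<gamma> s) (\<gamma> ?L) = ?L - s"
    using iso s \<open>0 \<le> ?L\<close> by auto
  ultimately show "cmod (f (\<gamma> s) - f a) = s" "cmod (f (\<gamma> s) - f b) = ?L - s"
    using a b by (simp_all add: dist_eq)
qed (use a b s dist_eq in auto)

lemma isometric_sides_comparison:
  assumes \<gamma>: "geodesic_path X d \<gamma> a b" "a \<in> X" "b \<in> X"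
    and \<gamma>': "geodesic_path X d \<gamma>' a' b'" "a' \<in> X" "b' \<in> X"
    and ends: "f a = tri_point x y z ca" "f b = tri_point x y z cb"
      "f a' = tri_point x y z ca'" "f b' = tri_point x y z cb'"
    and cong: "cmod (x - y) = cmod (P - Q)" "cmod (y - z) = cmod (Q - R)" "cmod (z - x) = cmod (R - P)"
    and s: "s \<in> {0..d a b}" and t: "t \<in> {0..d a' b'}"
  shows "d (\<gamma> s) (\<gamma>' t) = cmod (cmp_pt (tri_point P Q R ca) (tri_point P Q R cb) (d a b) s
                                  - cmp_pt (tri_point P Q R ca') (tri_point P Q R cb') (d a' b') t)"
proof -
  let ?c = "(1 - s / d a b) *\<^sub>R ca + (s / d a b) *\<^sub>R cb"
  let ?c' = "(1 - t / d a' b') *\<^sub>R ca' + (t / d a' b') *\<^sub>R cb'"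
  have "\<gamma> s \<in> X" "\<gamma>' t \<in> X"
    using \<gamma>(1) \<gamma>'(1) s t by (auto simp: geodesic_path_def)
  then have "d (\<gamma> s) (\<gamma>' t) = cmod (f (\<gamma> s) - f (\<gamma>' t))"
    by (rule dist_eq)
  also have "f (\<gamma> s) = tri_point x y z ?c"
    unfolding isometric_geodesic_image[OF \<gamma> s] ends(1,2) tri_point_segment ..
  also have "f (\<gamma>' t) = tri_point x y z ?c'"
    unfolding isometric_geodesic_image[OF \<gamma>' t] ends(3,4) tri_point_segment ..
  also have "cmod (tri_point x y z ?c - tri_point x y z ?c') = cmod (tri_point P Q R ?c - tri_point P Q R ?c')"
    using tri_point_dist_congruent[OF cong] .
  finally show ?thesis
    unfolding cmp_pt_def tri_point_segment .
qed

lemma triangle_side_coords: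
  assumes p: "p \<in> X" and q: "q \<in> X" and r: "r \<in> X"
    and geod: "geodesic_path X d \<gamma>1 p q" "geodesic_path X d \<gamma>2 q r" "geodesic_path X d \<gamma>3 r p"
    and side: "(\<gamma>, A, B, L) \<in> {(\<gamma>1, P, Q, d p q), (\<gamma>2, Q, R, d q r), (\<gamma>3, R, P, d r p)}"
  obtains a b ca cb where "geodesic_path X d \<gamma> a b" "a \<in> X" "b \<in> X" "L = d a b"
    "A = tri_point P Q R ca" "B = tri_point P Q R cb"
    "f a = tri_point (f p) (f q) (f r) ca" "f b = tri_point (f p) (f q) (f r) cb"
proof -
  from side consider "(\<gamma>, A, B, L) = (\<gamma>1, P, Q, d p q)" | "(\<gamma>, A, B, L) = (\<gamma>2, Q, R, d q r)"
    | "(\<gamma>, A, B, L) = (\<gamma>3, R, P, d r p)"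
    by blast
  then show ?thesis
  proof cases
    case 1
    then show ?thesis
      using that[of p q "(1, 0)" "(0, 1)"] geod p q by (simp add: tri_point_vertices)
  next
    case 2
    then show ?thesis
      using that[of q r "(0, 1)" "(0, 0)"] geod q r by (simp add: tri_point_vertices)
  next
    case 3
    then show ?thesis
      using that[of r p "(0, 0)" "(1, 0)"] geod r p by (simp add: tri_point_vertices)
  qed
qed

lemma isometric_triangle_comparison:
  assumes p: "p \<in> X" and q: "q \<in> X" and r: "r \<in> X"
    and geod: "geodesic_path X d \<gamma>1 p q" "geodesic_path X d \<gamma>2 q r" "geodesic_path X d \<gamma>3 r p"
    and cmp: "cmod (P - Q) = d p q" "cmod (Q - R) = d q r" "cmod (R - P) = d r p"
    and sides: "(\<gamma>, A, B, L) \<in> {(\<gamma>1, P, Q, d p q), (\<gamma>2, Q, R, d q r), (\<gamma>3, R, P, d r p)}"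
      "(\<gamma>', A', B', L') \<in> {(\<gamma>1, P, Q, d p q), (\<gamma>2, Q, R, d q r), (\<gamma>3, R, P, d r p)}"
    and st: "s \<in> {0..L}" "t \<in> {0..L'}"
  shows "d (\<gamma> s) (\<gamma>' t) \<le> cmod (cmp_pt A B L s - cmp_pt A' B' L' t)"
proof -
  let ?x = "f p" and ?y = "f q" and ?z = "f r"
  have cong: "cmod (?x - ?y) = cmod (P - Q)" "cmod (?y - ?z) = cmod (Q - R)" "cmod (?z - ?x) = cmod (R - P)"
    using cmp p q r by (simp_all add: dist_eq)
  obtain a b ca cb where
    "geodesic_path X d \<gamma> a b" "a \<in> X" "b \<in> X" "L = d a b" "A = tri_point P Q R ca" "B = tri_point P Q R cb"
    "f a = tri_point ?x ?y ?z ca" "f b = tri_point ?x ?y ?z cb"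
    by (rule triangle_side_coords[OF p q r geod sides(1)])
  moreover obtain a' b' ca' cb' where
    "geodesic_path X d \<gamma>' a' b'" "a' \<in> X" "b' \<in> X" "L' = d a' b'" "A' = tri_point P Q R ca'"
    "B' = tri_point P Q R cb'" "f a' = tri_point ?x ?y ?z ca'" "f b' = tri_point ?x ?y ?z cb'"
    by (rule triangle_side_coords[OF p q r geod sides(2)])
  ultimately show ?thesis
    using isometric_sides_comparison[of \<gamma> a b \<gamma>' a' b' ?x ?y ?z ca cb ca' cb' P Q R s t] cong st by simp
qed

theorem CAT0_isometric_convex: "CAT0 X d"
  unfolding CAT0_def
proof (intro conjI)
  show "metric_on X d"
    by (rule isometric_metric_on)
  show "\<forall>a \<in> X. \<forall>b \<in> X. \<exists>\<gamma>. geodesic_path X d \<gamma> a b"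
    using isometric_geodesic_exists by blast
  show "\<forall>p\<in>X. \<forall>q\<in>X. \<forall>r\<in>X. \<forall>\<gamma>1 \<gamma>2 \<gamma>3 P Q R.
       geodesic_path X d \<gamma>1 p q \<and> geodesic_path X d \<gamma>2 q r \<and> geodesic_path X d \<gamma>3 r p \<and>
       cmod (P - Q) = d p q \<and> cmod (Q - R) = d q r \<and> cmod (R - P) = d r p \<longrightarrow>
       (\<forall>(\<gamma>, A, B, L) \<in> {(\<gamma>1, P, Q, d p q), (\<gamma>2, Q, R, d q r), (\<gamma>3, R, P, d r p)}.
        \<forall>(\<gamma>', A', B', L') \<in> {(\<gamma>1, P, Q, d p q), (\<gamma>2, Q, R, d q r), (\<gamma>3, R, P, d r p)}.
        \<forall>s\<in>{0..L}. \<forall>t\<in>{0..L'}. d (\<gamma> s) (\<gamma>' t) \<le> cmod (cmp_pt A B L s - cmp_pt A' B' L' t))"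
    by (intro ballI allI impI; clarify) (rule isometric_triangle_comparison; assumption)
qed

end

section \<open>A triangulated square\<close>

definition grid :: "(int \<times> int) set" where
  "grid = {-1, 0, 1} \<times> {-1, 0, 1}"

definition grid_type :: "int \<times> int \<Rightarrow> gen" where
  "grid_type g = (if g = (0, 0) then S1 else if fst g = 0 \<or> snd g = 0 then S2 else S3)"

text \<open>The square \<open>[-1,1]^2\<close> is cut into the eight triangles \<open>chamber m d\<close> with vertices \<open>0\<close>, the
  edge midpoint \<open>m\<close> and the corner \<open>m + d\<close>; each is an isosceles right triangle with its right
  angle at \<open>m\<close>, a vertex of type \<open>\<hat>s_2\<close>.\<close>

definition grid_chambers :: "((int \<times> int) \<times> (int \<times> int)) list" where
  "grid_chambers = [((1, 0), (0, 1)), ((1, 0), (0, -1)), ((-1, 0), (0, 1)), ((-1, 0), (0, -1)),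
                    ((0, 1), (1, 0)), ((0, 1), (-1, 0)), ((0, -1), (1, 0)), ((0, -1), (-1, 0))]"

definition chamber :: "int \<times> int \<Rightarrow> int \<times> int \<Rightarrow> (int \<times> int) set" where
  "chamber m d = {(0, 0), m, m + d}"

definition grid_point :: "int \<times> int \<Rightarrow> complex" where
  "grid_point g = Complex (of_int (fst g)) (of_int (snd g))"

definition square :: "complex set" where
  "square = cbox (Complex (-1) (-1)) (Complex 1 1)"

lemma mem_square: "z \<in> square \<longleftrightarrow> \<bar>Re z\<bar> \<le> 1 \<and> \<bar>Im z\<bar> \<le> 1"
  by (auto simp: square_def mem_box Basis_complex_def)

lemma grid_chambers_cases:
  assumes "(m, d) \<in> set grid_chambers"
  obtains "m = (1, 0)" "d = (0, 1)" | "m = (1, 0)" "d = (0, -1)" | "m = (-1, 0)" "d = (0, 1)"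
    | "m = (-1, 0)" "d = (0, -1)" | "m = (0, 1)" "d = (1, 0)" | "m = (0, 1)" "d = (-1, 0)"
    | "m = (0, -1)" "d = (1, 0)" | "m = (0, -1)" "d = (-1, 0)"
  using assms by (auto simp: grid_chambers_def)

lemma grid_chamber_facts:
  assumes "(m, d) \<in> set grid_chambers"
  shows "m \<noteq> (0, 0)" "m + d \<noteq> (0, 0)" "m \<noteq> m + d" "m \<in> grid" "m + d \<in> grid"
    "grid_type m = S2" "grid_type (m + d) = S3"
  using assms by (cases rule: grid_chambers_cases; simp add: grid_def grid_type_def)+

lemma chamber_subset_grid: "(m, d) \<in> set grid_chambers \<Longrightarrow> chamber m d \<subseteq> grid"
  using grid_chamber_facts by (auto simp: chamber_def grid_def)

lemma grid_point_add: "grid_point (m + d) = grid_point m + grid_point d"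
  by (simp add: grid_point_def complex_eq_iff)

lemma grid_point_zero [simp]: "grid_point (0, 0) = 0"
  by (simp add: grid_point_def complex_eq_iff)

lemma grid_type_zero [simp]: "grid_type (0, 0) = S1"
  by (simp add: grid_type_def)

text \<open>The point \<open>a m + b d\<close> with \<open>0 \<le> b \<le> a \<le> 1\<close> of \<open>chamber m d\<close> has barycentric coordinates
  \<open>1 - a\<close>, \<open>a - b\<close>, \<open>b\<close> at \<open>0\<close>, \<open>m\<close>, \<open>m + d\<close>.\<close>

definition chamber_point :: "int \<times> int \<Rightarrow> int \<times> int \<Rightarrow> real \<Rightarrow> real \<Rightarrow> complex" where
  "chamber_point m d a b = of_real a * grid_point m + of_real b * grid_point d"

definition chamber_coords :: "int \<times> int \<Rightarrow> int \<times> int \<Rightarrow> real \<Rightarrow> real \<Rightarrow> int \<times> int \<Rightarrow> real" where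
  "chamber_coords m d a b g =
     (if g = (0, 0) then 1 - a else if g = m then a - b else if g = m + d then b else 0)"

lemma chamber_point_in_square:
  assumes "(m, d) \<in> set grid_chambers" "0 \<le> b" "b \<le> a" "a \<le> 1"
  shows "chamber_point m d a b \<in> square"
  using assms(1)
  by (cases rule: grid_chambers_cases)
    (use assms(2-4) in \<open>auto simp: mem_square chamber_point_def grid_point_def\<close>)

lemma chamber_point_Complex:
  "chamber_point m d a b = Complex (a * of_int (fst m) + b * of_int (fst d)) (a * of_int (snd m) + b * of_int (snd d))"
  by (simp add: chamber_point_def grid_point_def complex_eq_iff)

lemma norm_chamber_point:
  assumes "(m, d) \<in> set grid_chambers"
  shows "cmod (chamber_point m d a b) = cmod (Complex a b)"
  using assms unfolding chamber_point_Complex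
  by (cases rule: grid_chambers_cases) (simp_all add: complex_norm)

text \<open>The barycentric coordinate of the grid vertex \<open>g\<close>, as a function on the whole square.\<close>

definition tent :: "int \<times> int \<Rightarrow> complex \<Rightarrow> real" where
  "tent g z = (if g = (0, 0) then 1 - max \<bar>Re z\<bar> \<bar>Im z\<bar>
     else if snd g = 0 then max 0 (of_int (fst g) * Re z - \<bar>Im z\<bar>)
     else if fst g = 0 then max 0 (of_int (snd g) * Im z - \<bar>Re z\<bar>)
     else max 0 (min (of_int (fst g) * Re z) (of_int (snd g) * Im z)))"

lemma tent_chamber_point:
  assumes c: "(m, d) \<in> set grid_chambers" and g: "g \<in> grid" and ab: "0 \<le> b" "b \<le> a" "a \<le> 1"
  shows "tent g (chamber_point m d a b) = chamber_coords m d a b g"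
proof -
  have ab': "\<bar>a\<bar> = a" "\<bar>b\<bar> = b" "max a b = a" "max b a = a" "min a b = b" "min b a = b"
    using ab by auto
  from g have "g \<in> {(-1, -1), (-1, 0), (-1, 1), (0, -1), (0, 0), (0, 1), (1, -1), (1, 0), (1, 1)}"
    by (auto simp: grid_def)
  with c show ?thesis
    unfolding chamber_point_Complex
    by (cases rule: grid_chambers_cases; simp only: insert_iff empty_iff; elim disjE;
        simp add: tent_def chamber_coords_def ab'; simp add: max_def min_def; use ab in linarith)
qed

lemma square_chamber_point:
  assumes "z \<in> square"
  obtains m d a b where "(m, d) \<in> set grid_chambers" "0 \<le> b" "b \<le> a" "a \<le> 1" "z = chamber_point m d a b"
proof -
  define sx :: int where "sx = (if 0 \<le> Re z then 1 else -1)"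
  define sy :: int where "sy = (if 0 \<le> Im z then 1 else -1)"
  have s: "sx \<in> {1, -1}" "sy \<in> {1, -1}"
    by (simp_all add: sx_def sy_def)
  have xy: "Re z = of_int sx * \<bar>Re z\<bar>" "Im z = of_int sy * \<bar>Im z\<bar>"
    by (simp_all add: sx_def sy_def)
  have z: "\<bar>Re z\<bar> \<le> 1" "\<bar>Im z\<bar> \<le> 1"
    using assms by (simp_all add: mem_square)
  show ?thesis
  proof (cases "\<bar>Im z\<bar> \<le> \<bar>Re z\<bar>")
    case True
    have zeq: "z = chamber_point (sx, 0) (0, sy) \<bar>Re z\<bar> \<bar>Im z\<bar>"
      using xy by (simp add: chamber_point_Complex complex_eq_iff mult.commute)
    have "((sx, 0), (0, sy)) \<in> set grid_chambers"
      using s by (auto simp: grid_chambers_def)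
    then show ?thesis
      by (rule that[OF _ _ _ _ zeq]) (use True z in auto)
  next
    case False
    have zeq: "z = chamber_point (0, sy) (sx, 0) \<bar>Im z\<bar> \<bar>Re z\<bar>"
      using xy by (simp add: chamber_point_Complex complex_eq_iff mult.commute)
    have "((0, sy), (sx, 0)) \<in> set grid_chambers"
      using s by (auto simp: grid_chambers_def)
    then show ?thesis
      by (rule that[OF _ _ _ _ zeq]) (use False z in auto)
  qed
qed

lemma convex_square: "convex square"
  by (simp add: square_def)

definition region :: "complex list \<Rightarrow> complex set" where
  "region L = square \<inter> (\<Inter>u \<in> set L. {z. 0 \<le> inner u z})"

lemma convex_region: "convex (region L)"
  unfolding region_def by (intro convex_Int convex_square convex_INT convex_halfspace_ge)

lemma segment_meets_hyperplane:
  fixes a b u :: "'a :: real_inner"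
  assumes a: "0 \<le> inner u a" and b: "inner u b \<le> 0"
  obtains z where "z \<in> closed_segment a b" "inner u z = 0"
proof (cases "inner u a = inner u b")
  case True
  then show ?thesis
    using that[of a] a b by simp
next
  case False
  define t where "t = inner u a / (inner u a - inner u b)"
  have "0 < inner u a - inner u b"
    using a b False by linarith
  then have t: "0 \<le> t" "t \<le> 1"
    using a b by (simp_all add: t_def)
  have "inner u ((1 - t) *\<^sub>R a + t *\<^sub>R b) = inner u a - t * (inner u a - inner u b)"
    by (simp add: inner_add_right algebra_simps)
  also have "\<dots> = 0"
    using \<open>0 < inner u a - inner u b\<close> by (simp add: t_def)
  finally show ?thesis
    using t by (intro that[of "(1 - t) *\<^sub>R a + t *\<^sub>R b"]) (auto simp: closed_segment_def)
qed

lemma region_chamber_point: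
  assumes c: "(m, d) \<in> set grid_chambers" and z: "z \<in> region [grid_point m - grid_point d, grid_point d]"
  obtains a b where "0 \<le> b" "b \<le> a" "a \<le> 1" "z = chamber_point m d a b"
proof -
  have "\<bar>Re z\<bar> \<le> 1" "\<bar>Im z\<bar> \<le> 1" "0 \<le> inner (grid_point m - grid_point d) z" "0 \<le> inner (grid_point d) z"
    using z by (auto simp: region_def mem_square)
  with c have "0 \<le> inner (grid_point d) z" "inner (grid_point d) z \<le> inner (grid_point m) z"
    "inner (grid_point m) z \<le> 1" "z = chamber_point m d (inner (grid_point m) z) (inner (grid_point d) z)"
    by (cases rule: grid_chambers_cases;
        auto simp: inner_complex_def grid_point_def chamber_point_Complex complex_eq_iff)+
  then show ?thesis
    by (rule that)
qed

lemma zip_tl_append: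
  assumes "xs \<noteq> []" "ys \<noteq> []" "last xs = hd ys"
  shows "zip (xs @ tl ys) (tl (xs @ tl ys)) = zip xs (tl xs) @ zip ys (tl ys)"
  using assms
proof (induct xs)
  case (Cons x xs)
  show ?case
  proof (cases "xs = []")
    case True
    then show ?thesis
      using Cons.prems by (cases ys) auto
  next
    case False
    then show ?thesis
      using Cons by (cases xs) auto
  qed
qed simp

locale square_complex =
  fixes K :: "vertex set set" and pos :: "vertex \<Rightarrow> int \<times> int"
  assumes inj_pos: "inj_on pos (\<Union>K)"
    and pos_image: "pos ` \<Union>K = grid"
    and type_pos: "\<And>v. v \<in> \<Union>K \<Longrightarrow> fst v = grid_type (pos v)"
    and simplex_iff: "\<And>\<sigma>. \<sigma> \<in> K \<longleftrightarrow> \<sigma> \<noteq> {} \<and> \<sigma> \<subseteq> \<Union>K \<and> (\<exists>(m, d) \<in> set grid_chambers. pos ` \<sigma> \<subseteq> chamber m d)"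
begin

lemma finite_vertices: "finite (\<Union>K)"
proof -
  have "finite grid"
    by (simp add: grid_def)
  then show ?thesis
    using finite_image_iff[OF inj_pos] pos_image by simp
qed

definition plane_pos :: "(vertex \<Rightarrow> real) \<Rightarrow> complex" where
  "plane_pos p = (\<Sum>v \<in> \<Union>K. of_real (p v) * grid_point (pos v))"

definition from_plane :: "complex \<Rightarrow> vertex \<Rightarrow> real" where
  "from_plane z = (\<lambda>v. if v \<in> \<Union>K then tent (pos v) z else 0)"

definition vertex_at :: "int \<times> int \<Rightarrow> vertex" where
  "vertex_at g = inv_into (\<Union>K) pos g"

lemma vertex_at: "g \<in> grid \<Longrightarrow> vertex_at g \<in> \<Union>K \<and> pos (vertex_at g) = g"
  unfolding vertex_at_def using pos_image by (metis f_inv_into_f inv_into_into)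

lemma vertex_at_pos: "v \<in> \<Union>K \<Longrightarrow> vertex_at (pos v) = v"
  unfolding vertex_at_def using inj_pos by (simp add: inv_into_f_f)

definition chamber_simplex :: "int \<times> int \<Rightarrow> int \<times> int \<Rightarrow> vertex set" where
  "chamber_simplex m d = {v \<in> \<Union>K. pos v \<in> chamber m d}"

lemma chamber_simplex_eq:
  assumes "(m, d) \<in> set grid_chambers"
  shows "chamber_simplex m d = vertex_at ` chamber m d"
proof
  show "chamber_simplex m d \<subseteq> vertex_at ` chamber m d"
  proof
    fix v
    assume "v \<in> chamber_simplex m d"
    then have "v \<in> \<Union>K" "pos v \<in> chamber m d"
      by (auto simp: chamber_simplex_def)
    then show "v \<in> vertex_at ` chamber m d"
      using vertex_at_pos by (metis image_eqI)
  qed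
  show "vertex_at ` chamber m d \<subseteq> chamber_simplex m d"
  proof
    fix v
    assume "v \<in> vertex_at ` chamber m d"
    then obtain g where "g \<in> chamber m d" "v = vertex_at g"
      by blast
    then show "v \<in> chamber_simplex m d"
      using vertex_at[of g] chamber_subset_grid[OF assms] by (auto simp: chamber_simplex_def)
  qed
qed

lemma sum_chamber_simplex:
  assumes c: "(m, d) \<in> set grid_chambers"
  shows "(\<Sum>v \<in> chamber_simplex m d. h v) = h (vertex_at (0, 0)) + h (vertex_at m) + h (vertex_at (m + d))"
proof -
  have "inj_on vertex_at (chamber m d)"
  proof (rule inj_on_inverseI[where g = pos])
    fix g
    assume "g \<in> chamber m d"
    then show "pos (vertex_at g) = g"
      using vertex_at chamber_subset_grid[OF c] by blast
  qed
  then have "(\<Sum>v \<in> chamber_simplex m d. h v) = (\<Sum>g \<in> chamber m d. h (vertex_at g))"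
    unfolding chamber_simplex_eq[OF c] by (rule sum.reindex[unfolded comp_def])
  also have "\<dots> = h (vertex_at (0, 0)) + h (vertex_at m) + h (vertex_at (m + d))"
    using grid_chamber_facts[OF c] by (simp add: chamber_def add.assoc)
  finally show ?thesis .
qed

lemma chamber_simplex_in_K:
  assumes c: "(m, d) \<in> set grid_chambers"
  shows "chamber_simplex m d \<in> K"
proof -
  have "vertex_at (0, 0) \<in> chamber_simplex m d"
    using vertex_at[of "(0, 0)"] by (simp add: chamber_simplex_def chamber_def grid_def)
  moreover have "chamber_simplex m d \<subseteq> \<Union>K" "pos ` chamber_simplex m d \<subseteq> chamber m d"
    by (auto simp: chamber_simplex_def)
  ultimately show ?thesis
    using c simplex_iff by blast
qed

lemma finite_chamber_simplex: "finite (chamber_simplex m d)"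
  by (rule finite_subset[OF _ finite_vertices]) (auto simp: chamber_simplex_def)

lemma vertex_at_chamber:
  assumes c: "(m, d) \<in> set grid_chambers"
  shows "vertex_at (0, 0) \<in> \<Union>K" "vertex_at m \<in> \<Union>K" "vertex_at (m + d) \<in> \<Union>K"
    and "pos (vertex_at (0, 0)) = (0, 0)" "pos (vertex_at m) = m" "pos (vertex_at (m + d)) = m + d"
  using vertex_at grid_chamber_facts[OF c] by (auto simp: grid_def)

lemma from_plane_chamber_point:
  assumes c: "(m, d) \<in> set grid_chambers" and ab: "0 \<le> b" "b \<le> a" "a \<le> 1"
  shows "from_plane (chamber_point m d a b) = (\<lambda>v. if v \<in> \<Union>K then chamber_coords m d a b (pos v) else 0)"
proof
  fix v
  show "from_plane (chamber_point m d a b) v = (if v \<in> \<Union>K then chamber_coords m d a b (pos v) else 0)"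
    using tent_chamber_point[OF c _ ab, of "pos v"] pos_image by (auto simp: from_plane_def)
qed

lemma from_plane_chamber_point_outside:
  assumes c: "(m, d) \<in> set grid_chambers" and ab: "0 \<le> b" "b \<le> a" "a \<le> 1"
    and v: "v \<notin> chamber_simplex m d"
  shows "from_plane (chamber_point m d a b) v = 0"
  using v by (auto simp: from_plane_chamber_point[OF c ab] chamber_simplex_def chamber_coords_def chamber_def)

lemma csimp_from_plane_chamber_point:
  assumes c: "(m, d) \<in> set grid_chambers" and ab: "0 \<le> b" "b \<le> a" "a \<le> 1"
  shows "from_plane (chamber_point m d a b) \<in> csimp (chamber_simplex m d)"
proof -
  let ?p = "from_plane (chamber_point m d a b)"
  have "sum ?p (chamber_simplex m d) = 1"
    unfolding sum_chamber_simplex[OF c] using vertex_at_chamber[OF c] grid_chamber_facts[OF c]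
    by (simp add: from_plane_chamber_point[OF c ab] chamber_coords_def)
  moreover have "\<forall>v \<in> chamber_simplex m d. 0 \<le> ?p v"
    using ab by (auto simp: from_plane_chamber_point[OF c ab] chamber_coords_def)
  ultimately show ?thesis
    using from_plane_chamber_point_outside[OF c ab] by (simp add: csimp_def)
qed

lemma plane_pos_from_plane_chamber_point:
  assumes c: "(m, d) \<in> set grid_chambers" and ab: "0 \<le> b" "b \<le> a" "a \<le> 1"
  shows "plane_pos (from_plane (chamber_point m d a b)) = chamber_point m d a b"
proof -
  let ?p = "from_plane (chamber_point m d a b)"
  have "plane_pos ?p = (\<Sum>v \<in> chamber_simplex m d. of_real (?p v) * grid_point (pos v))"
    unfolding plane_pos_def
  proof (rule sum.mono_neutral_right[OF finite_vertices])
    show "chamber_simplex m d \<subseteq> \<Union>K"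
      by (auto simp: chamber_simplex_def)
    show "\<forall>v \<in> \<Union>K - chamber_simplex m d. of_real (?p v) * grid_point (pos v) = 0"
      using from_plane_chamber_point_outside[OF c ab] by simp
  qed
  also have "\<dots> = of_real (a - b) * grid_point m + of_real b * grid_point (m + d)"
    unfolding sum_chamber_simplex[OF c] using vertex_at_chamber[OF c] grid_chamber_facts[OF c]
    by (simp add: from_plane_chamber_point[OF c ab] chamber_coords_def)
  also have "\<dots> = chamber_point m d a b"
    by (simp add: chamber_point_def grid_point_add algebra_simps)
  finally show ?thesis .
qed

lemma opos_from_plane_chamber_point:
  assumes c: "(m, d) \<in> set grid_chambers" and ab: "0 \<le> b" "b \<le> a" "a \<le> 1"
  shows "opos (from_plane (chamber_point m d a b)) = Complex (1 - a) b"
proof -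
  let ?p = "from_plane (chamber_point m d a b)"
  have "{v. ?p v \<noteq> 0} \<subseteq> chamber_simplex m d"
    using from_plane_chamber_point_outside[OF c ab] by blast
  then have "opos ?p = (\<Sum>v \<in> chamber_simplex m d. of_real (?p v) * corner (fst v))"
    unfolding opos_def by (intro sum.mono_neutral_left finite_chamber_simplex) auto
  also have "\<dots> = of_real (1 - a) + of_real b * \<i>"
    unfolding sum_chamber_simplex[OF c] using vertex_at_chamber[OF c] grid_chamber_facts[OF c]
    by (simp add: from_plane_chamber_point[OF c ab] chamber_coords_def type_pos)
  also have "\<dots> = Complex (1 - a) b"
    by (simp add: complex_eq_iff)
  finally show ?thesis .
qed

lemma csimp_chamber_point:
  assumes \<sigma>: "\<sigma> \<in> K" and p: "p \<in> csimp \<sigma>"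
    and c: "(m, d) \<in> set grid_chambers" and sub: "pos ` \<sigma> \<subseteq> chamber m d"
  obtains a b where "0 \<le> b" "b \<le> a" "a \<le> 1" "p = from_plane (chamber_point m d a b)"
proof -
  define a where "a = p (vertex_at m) + p (vertex_at (m + d))"
  define b where "b = p (vertex_at (m + d))"
  have "\<sigma> \<subseteq> \<Union>K"
    using \<sigma> by blast
  then have \<sigma>c: "\<sigma> \<subseteq> chamber_simplex m d"
    using sub by (auto simp: chamber_simplex_def)
  have p0: "\<forall>v. v \<notin> \<sigma> \<longrightarrow> p v = 0" and "\<forall>v \<in> \<sigma>. 0 \<le> p v"
    using p by (simp_all add: csimp_def)
  then have nn: "0 \<le> p v" for v
    by (metis order_refl)
  have zero: "p v = 0" if "v \<notin> chamber_simplex m d" for v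
    using that \<sigma>c p0 by blast
  have "sum p (chamber_simplex m d) = sum p \<sigma>"
    by (rule sum.mono_neutral_right[OF finite_chamber_simplex \<sigma>c]) (use p in \<open>auto simp: csimp_def\<close>)
  then have sum1: "p (vertex_at (0, 0)) + p (vertex_at m) + p (vertex_at (m + d)) = 1"
    using p sum_chamber_simplex[OF c, of p] by (simp add: csimp_def)
  have ab: "0 \<le> b" "b \<le> a" "a \<le> 1"
    using nn[of "vertex_at (0, 0)"] nn[of "vertex_at m"] nn[of "vertex_at (m + d)"] sum1
    unfolding a_def b_def by linarith+
  have facts: "(0, 0) \<noteq> m" "(0, 0) \<noteq> m + d" "m \<noteq> m + d"
    using grid_chamber_facts[OF c] by auto
  have "p v = (if v \<in> \<Union>K then chamber_coords m d a b (pos v) else 0)" for v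
  proof (cases "v \<in> chamber_simplex m d")
    case True
    then have v: "v \<in> \<Union>K" "vertex_at (pos v) = v" "pos v \<in> chamber m d"
      using vertex_at_pos by (auto simp: chamber_simplex_def)
    then consider "pos v = (0, 0)" | "pos v = m" | "pos v = m + d"
      by (auto simp: chamber_def)
    then show ?thesis
      by cases (use v sum1 facts in \<open>auto simp: chamber_coords_def a_def b_def\<close>)
  next
    case False
    then show ?thesis
      using zero by (auto simp: chamber_simplex_def chamber_coords_def chamber_def)
  qed
  then have "p = from_plane (chamber_point m d a b)"
    using from_plane_chamber_point[OF c ab] by auto
  with ab show ?thesis
    by (rule that)
qed

lemma realize_chamber_point:
  assumes "p \<in> realize K"
  obtains m d a b where "(m, d) \<in> set grid_chambers" "0 \<le> b" "b \<le> a" "a \<le> 1"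
    "p = from_plane (chamber_point m d a b)"
proof -
  obtain \<sigma> where \<sigma>: "\<sigma> \<in> K" "p \<in> csimp \<sigma>"
    using assms by (auto simp: realize_def)
  then obtain m d where c: "(m, d) \<in> set grid_chambers" and "pos ` \<sigma> \<subseteq> chamber m d"
    using simplex_iff by blast
  then obtain a b where "0 \<le> b" "b \<le> a" "a \<le> 1" "p = from_plane (chamber_point m d a b)"
    by (rule csimp_chamber_point[OF \<sigma>])
  with c show ?thesis
    by (rule that)
qed

lemma from_plane_in_realize:
  assumes "z \<in> square"
  shows "from_plane z \<in> realize K" "plane_pos (from_plane z) = z"
proof -
  obtain m d a b where c: "(m, d) \<in> set grid_chambers" and ab: "0 \<le> b" "b \<le> a" "a \<le> 1"
    and z: "z = chamber_point m d a b"
    by (rule square_chamber_point[OF assms])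
  show "from_plane z \<in> realize K"
    unfolding z using realizeI[OF chamber_simplex_in_K[OF c] csimp_from_plane_chamber_point[OF c ab]] .
  show "plane_pos (from_plane z) = z"
    unfolding z using plane_pos_from_plane_chamber_point[OF c ab] .
qed

lemma from_plane_plane_pos: "p \<in> realize K \<Longrightarrow> from_plane (plane_pos p) = p"
  by (metis realize_chamber_point plane_pos_from_plane_chamber_point)

lemma bij_betw_plane_pos: "bij_betw plane_pos (realize K) square"
proof (rule bij_betw_byWitness[where f' = from_plane])
  show "\<forall>p \<in> realize K. from_plane (plane_pos p) = p"
    using from_plane_plane_pos by blast
  show "\<forall>z \<in> square. plane_pos (from_plane z) = z"
    using from_plane_in_realize(2) by blast
  show "plane_pos ` realize K \<subseteq> square"
    by (auto elim!: realize_chamber_point simp: plane_pos_from_plane_chamber_point chamber_point_in_square)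
  show "from_plane ` square \<subseteq> realize K"
    using from_plane_in_realize(1) by blast
qed

lemma norm_opos_diff:
  assumes \<sigma>: "\<sigma> \<in> K" and p: "p \<in> csimp \<sigma>" and q: "q \<in> csimp \<sigma>"
  shows "cmod (opos p - opos q) = cmod (plane_pos p - plane_pos q)"
proof -
  obtain m d where c: "(m, d) \<in> set grid_chambers" and sub: "pos ` \<sigma> \<subseteq> chamber m d"
    using \<sigma> simplex_iff by blast
  obtain a b where ab: "0 \<le> b" "b \<le> a" "a \<le> 1" and pe: "p = from_plane (chamber_point m d a b)"
    by (rule csimp_chamber_point[OF \<sigma> p c sub])
  obtain a' b' where ab': "0 \<le> b'" "b' \<le> a'" "a' \<le> 1" and qe: "q = from_plane (chamber_point m d a' b')"
    by (rule csimp_chamber_point[OF \<sigma> q c sub])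
  have "plane_pos p - plane_pos q = chamber_point m d (a - a') (b - b')"
    unfolding pe qe plane_pos_from_plane_chamber_point[OF c ab] plane_pos_from_plane_chamber_point[OF c ab']
    by (simp add: chamber_point_def algebra_simps)
  moreover have "opos p - opos q = Complex (a' - a) (b - b')"
    unfolding pe qe opos_from_plane_chamber_point[OF c ab] opos_from_plane_chamber_point[OF c ab']
    by (simp add: complex_eq_iff)
  ultimately show ?thesis
    using norm_chamber_point[OF c] by (simp add: complex_norm power2_commute)
qed

lemma string_len_lower_bound:
  "string_ok K xs \<Longrightarrow> cmod (plane_pos (hd xs) - plane_pos (last xs)) \<le> string_len xs"
proof (induct xs rule: induct_list012)
  case (3 x y zs)
  obtain \<sigma> where \<sigma>: "\<sigma> \<in> K" "x \<in> csimp \<sigma>" "y \<in> csimp \<sigma>"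
    using "3"(3) by (auto simp: string_ok_def)
  have "string_ok K (y # zs)"
    using "3"(3) by (auto simp: string_ok_def)
  then have IH: "cmod (plane_pos y - plane_pos (last (y # zs))) \<le> string_len (y # zs)"
    using "3"(2) by simp
  have "cmod (plane_pos x - plane_pos (last (y # zs)))
      \<le> cmod (plane_pos x - plane_pos y) + cmod (plane_pos y - plane_pos (last (y # zs)))"
    using norm_triangle_ineq[of "plane_pos x - plane_pos y" "plane_pos y - plane_pos (last (y # zs))"] by simp
  also have "\<dots> \<le> cmod (opos x - opos y) + string_len (y # zs)"
    using IH norm_opos_diff[OF \<sigma>] by simp
  also have "\<dots> = string_len (x # y # zs)"
    by (simp add: string_len_def)
  finally show ?case
    by simp
qed (auto simp: string_ok_def string_len_def)

definition short_string :: "complex \<Rightarrow> complex \<Rightarrow> bool" where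
  "short_string a b \<longleftrightarrow> (\<exists>xs. string_ok K xs \<and> hd xs = from_plane a \<and> last xs = from_plane b
      \<and> string_len xs \<le> cmod (a - b))"

lemma short_string_trans:
  assumes az: "short_string a z" and zb: "short_string z b" and "cmod (a - z) + cmod (z - b) = cmod (a - b)"
  shows "short_string a b"
proof -
  obtain xs where xs: "string_ok K xs" "hd xs = from_plane a" "last xs = from_plane z" "string_len xs \<le> cmod (a - z)"
    using az by (auto simp: short_string_def)
  obtain ys where ys: "string_ok K ys" "hd ys = from_plane z" "last ys = from_plane b" "string_len ys \<le> cmod (z - b)"
    using zb by (auto simp: short_string_def)
  have ne: "xs \<noteq> []" "ys \<noteq> []"
    using xs(1) ys(1) by (auto simp: string_ok_def)
  have "last xs = hd ys"
    using xs(3) ys(2) by simp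
  note zip = zip_tl_append[OF ne this]
  have "string_ok K (xs @ tl ys)"
    using xs(1) ys(1) ne unfolding string_ok_def zip by auto
  moreover have "hd (xs @ tl ys) = from_plane a"
    using xs(2) ne by simp
  moreover have "last (xs @ tl ys) = from_plane b"
    using ys(3) ne \<open>last xs = hd ys\<close> by (cases ys) (auto simp: last_append split: list.splits)
  moreover have "string_len (xs @ tl ys) = string_len xs + string_len ys"
    unfolding string_len_def zip by simp
  ultimately show ?thesis
    using xs(4) ys(4) assms(3) unfolding short_string_def by (metis add_mono)
qed

lemma short_string_chamber:
  assumes c: "(m, d) \<in> set grid_chambers" and ab: "0 \<le> b" "b \<le> a" "a \<le> 1" "0 \<le> b'" "b' \<le> a'" "a' \<le> 1"
  shows "short_string (chamber_point m d a b) (chamber_point m d a' b')"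
proof -
  let ?p = "from_plane (chamber_point m d a b)" and ?q = "from_plane (chamber_point m d a' b')"
  note p = csimp_from_plane_chamber_point[OF c ab(1-3)] plane_pos_from_plane_chamber_point[OF c ab(1-3)]
  note q = csimp_from_plane_chamber_point[OF c ab(4-6)] plane_pos_from_plane_chamber_point[OF c ab(4-6)]
  have "string_ok K [?p, ?q]"
    using p(1) q(1) chamber_simplex_in_K[OF c] by (auto simp: string_ok_def)
  moreover have "string_len [?p, ?q] = cmod (chamber_point m d a b - chamber_point m d a' b')"
    using norm_opos_diff[OF chamber_simplex_in_K[OF c] p(1) q(1)] p(2) q(2) by (simp add: string_len_def)
  ultimately show ?thesis
    unfolding short_string_def by (metis last.simps list.sel(1) list.distinct(1) order_refl)
qed

definition short_strings_on :: "complex set \<Rightarrow> bool" where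
  "short_strings_on A \<longleftrightarrow> (\<forall>a \<in> A. \<forall>b \<in> A. short_string a b)"

lemma short_strings_on_chamber:
  assumes c: "(m, d) \<in> set grid_chambers"
  shows "short_strings_on (region [grid_point m - grid_point d, grid_point d])"
  unfolding short_strings_on_def
proof (intro ballI)
  fix z w
  assume "z \<in> region [grid_point m - grid_point d, grid_point d]" "w \<in> region [grid_point m - grid_point d, grid_point d]"
  with c obtain a b a' b' where "0 \<le> b" "b \<le> a" "a \<le> 1" "z = chamber_point m d a b"
    and "0 \<le> b'" "b' \<le> a'" "a' \<le> 1" "w = chamber_point m d a' b'"
    by (metis region_chamber_point)
  with c show "short_string z w"
    using short_string_chamber by blast
qed

lemma short_strings_on_across:
  assumes pos: "short_strings_on (region (u # L))" and neg: "short_strings_on (region (- u # L))"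
    and a: "a \<in> region L" "0 \<le> inner u a" and b: "b \<in> region L" "inner u b \<le> 0"
  shows "short_string a b"
proof -
  obtain z where z: "z \<in> closed_segment a b" "inner u z = 0"
    using segment_meets_hyperplane a(2) b(2) by blast
  then have "z \<in> region L"
    using closed_segment_subset[OF a(1) b(1) convex_region] by blast
  then have "short_string a z" "short_string z b"
    using pos neg a b z(2) by (auto simp: short_strings_on_def region_def)
  moreover have "cmod (a - z) + cmod (z - b) = cmod (a - b)"
    using z(1) by (simp add: between_mem_segment[symmetric] between dist_norm)
  ultimately show ?thesis
    by (rule short_string_trans)
qed

lemma short_strings_on_split:
  assumes pos: "short_strings_on (region (u # L))" and neg: "short_strings_on (region (- u # L))"
  shows "short_strings_on (region L)"
  unfolding short_strings_on_def
proof (intro ballI)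
  fix a b
  assume a: "a \<in> region L" and b: "b \<in> region L"
  consider "0 \<le> inner u a" "0 \<le> inner u b" | "inner u a \<le> 0" "inner u b \<le> 0"
    | "0 \<le> inner u a" "inner u b \<le> 0" | "inner u a \<le> 0" "0 \<le> inner u b"
    by linarith
  then show "short_string a b"
  proof cases
    case 1
    then show ?thesis
      using pos a b by (auto simp: short_strings_on_def region_def)
  next
    case 2
    then show ?thesis
      using neg a b by (auto simp: short_strings_on_def region_def)
  next
    case 3
    then show ?thesis
      using short_strings_on_across[OF pos neg a(1) _ b(1)] by blast
  next
    case 4
    then show ?thesis
      using short_strings_on_across[of "- u" L a b] pos neg a b by simp
  qed
qed

lemma short_strings_on_quadrant:
  assumes s: "s1 \<in> {1, -1}" "s2 \<in> {1, -1}"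
  shows "short_strings_on (region [grid_point (s1, 0), grid_point (0, s2)])"
proof (rule short_strings_on_split[where u = "grid_point (s1, 0) - grid_point (0, s2)"])
  have "((s1, 0), (0, s2)) \<in> set grid_chambers" "((0, s2), (s1, 0)) \<in> set grid_chambers"
    using s by (auto simp: grid_chambers_def)
  note chambers = this[THEN short_strings_on_chamber]
  show "short_strings_on (region ((grid_point (s1, 0) - grid_point (0, s2)) # [grid_point (s1, 0), grid_point (0, s2)]))"
    using chambers(1) by (auto simp: short_strings_on_def region_def)
  show "short_strings_on (region (- (grid_point (s1, 0) - grid_point (0, s2)) # [grid_point (s1, 0), grid_point (0, s2)]))"
    using chambers(2) by (auto simp: short_strings_on_def region_def)
qed

lemma short_strings_on_square: "short_strings_on square"
proof -
  have minus: "- grid_point (a, b) = grid_point (- a, - b)" for a b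
    by (simp add: grid_point_def complex_eq_iff)
  have half: "short_strings_on (region [grid_point (0, s2)])" if "s2 \<in> {1, -1}" for s2
    by (rule short_strings_on_split[where u = "grid_point (1, 0)"])
      (use short_strings_on_quadrant[of 1 s2] short_strings_on_quadrant[of "-1" s2] that in \<open>simp_all add: minus\<close>)
  have "short_strings_on (region [])"
    by (rule short_strings_on_split[where u = "grid_point (0, 1)"])
      (use half[of 1] half[of "-1"] in \<open>simp_all add: minus\<close>)
  then show ?thesis
    by (simp add: region_def)
qed

lemma orth_dist_eq:
  assumes x: "x \<in> realize K" and y: "y \<in> realize K"
  shows "orth_dist K x y = cmod (plane_pos x - plane_pos y)"
proof -
  let ?S = "{string_len xs | xs. string_ok K xs \<and> hd xs = x \<and> last xs = y}"
  have "plane_pos x \<in> square" "plane_pos y \<in> square"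
    using bij_betw_plane_pos x y by (auto simp: bij_betw_def)
  then have "short_string (plane_pos x) (plane_pos y)"
    using short_strings_on_square by (simp add: short_strings_on_def)
  then obtain xs where xs: "string_ok K xs" "hd xs = x" "last xs = y"
    and len: "string_len xs \<le> cmod (plane_pos x - plane_pos y)"
    unfolding short_string_def from_plane_plane_pos[OF x] from_plane_plane_pos[OF y] by blast
  have lower: "cmod (plane_pos x - plane_pos y) \<le> l" if "l \<in> ?S" for l
    using that string_len_lower_bound by auto
  then have "string_len xs = cmod (plane_pos x - plane_pos y)"
    using xs len string_len_lower_bound[OF xs(1)] by simp
  then have "cmod (plane_pos x - plane_pos y) \<in> ?S"
    using xs by force
  then show ?thesis
    unfolding orth_dist_def using lower by (rule cInf_eq_minimum)
qed

theorem square_complex_CAT0: "CAT0 (realize K) (orth_dist K)"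
  by (rule CAT0_isometric_convex[OF convex_square bij_betw_plane_pos orth_dist_eq])

end

section \<open>A face of the cube is the triangulated square\<close>

fun drop_coord :: "axis \<Rightarrow> point \<Rightarrow> int \<times> int" where
  "drop_coord Axis1 (a, b, c) = (b, c)"
| "drop_coord Axis2 (a, b, c) = (a, c)"
| "drop_coord Axis3 (a, b, c) = (a, b)"

lemma point_eqI_coord_drop_coord: "coord j q = coord j q' \<Longrightarrow> drop_coord j q = drop_coord j q' \<Longrightarrow> q = q'"
  by (cases j; cases q; cases q') auto

lemma drop_coord_unit_point [simp]: "drop_coord j (unit_point j e) = (0, 0)"
  by (cases j) auto

lemma grid_eq: "grid = set [(-1, -1), (-1, 0), (-1, 1), (0, -1), (0, 0), (0, 1), (1, -1), (1, 0), (1, 1)]"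
  by (auto simp: grid_def)

lemma face_vertices_project:
  "\<forall>t \<in> set signed_perms. \<forall>i \<in> set [S1, S2, S3]. \<forall>j \<in> set [Axis1, Axis2, Axis3]. \<forall>e \<in> {1, -1}.
     coord j (perm_apply t (base_point i)) = e \<longrightarrow>
     grid_type (drop_coord j (perm_apply t (base_point i))) = i
     \<and> drop_coord j (perm_apply t (base_point i)) \<in> set [(-1, -1), (-1, 0), (-1, 1), (0, -1), (0, 0), (0, 1), (1, -1), (1, 0), (1, 1)]"
  by code_simp

lemma centred_chambers_project:
  "\<forall>t \<in> set signed_perms. \<forall>j \<in> set [Axis1, Axis2, Axis3]. \<forall>e \<in> {1, -1}.
     perm_apply t (base_point S1) = unit_point j e \<longrightarrow>
     (\<exists>(m, d) \<in> set grid_chambers. drop_coord j (perm_apply t (base_point S2)) = m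
        \<and> drop_coord j (perm_apply t (base_point S3)) = m + d)"
  by code_simp

lemma grid_chambers_lift:
  "\<forall>j \<in> set [Axis1, Axis2, Axis3]. \<forall>e \<in> {1, -1}. \<forall>(m, d) \<in> set grid_chambers.
     \<exists>t \<in> set signed_perms. perm_apply t (base_point S1) = unit_point j e
       \<and> drop_coord j (perm_apply t (base_point S2)) = m \<and> coord j (perm_apply t (base_point S2)) = e
       \<and> drop_coord j (perm_apply t (base_point S3)) = m + d \<and> coord j (perm_apply t (base_point S3)) = e"
  by code_simp

lemma grid_points_lift:
  "\<forall>j \<in> set [Axis1, Axis2, Axis3]. \<forall>e \<in> {1, -1}.
     \<forall>g \<in> set [(-1, -1), (-1, 0), (-1, 1), (0, -1), (0, 0), (0, 1), (1, -1), (1, 0), (1, 1)].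
     \<exists>t \<in> set signed_perms. \<exists>i \<in> set [S1, S2, S3].
       coord j (perm_apply t (base_point i)) = e \<and> drop_coord j (perm_apply t (base_point i)) = g"
  by code_simp

lemma fst_rho [simp]: "fst (rho v) = fst v"
  by (simp add: rho_def)

locale face_lift =
  fixes D' :: "vertex set set" and j :: axis and e :: int
  assumes e: "e \<in> {1, -1}"
    and lift: "is_lift D' {\<sigma> \<in> CB3. \<forall>v \<in> \<sigma>. coord j (vertex_point v) = e}"
begin

definition face_pos :: "vertex \<Rightarrow> int \<times> int" where
  "face_pos v = drop_coord j (vertex_point (rho v))"

lemma lift_facts:
  "subcomplex D' DB3" "inj_on rho (\<Union>D')"
  "(\<lambda>\<sigma>. rho ` \<sigma>) ` D' = {\<sigma> \<in> CB3. \<forall>v \<in> \<sigma>. coord j (vertex_point v) = e}"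
  using lift by (auto simp: is_lift_def)

lemma rho_lift_vertex:
  assumes "v \<in> \<Union>D'"
  shows "rho v \<in> verts True" "coord j (vertex_point (rho v)) = e"
proof -
  obtain \<sigma> where "\<sigma> \<in> D'" "v \<in> \<sigma>"
    using assms by blast
  then have "rho ` \<sigma> \<in> CB3" "\<forall>w \<in> rho ` \<sigma>. coord j (vertex_point w) = e"
    using lift_facts(3) by blast+
  then show "rho v \<in> verts True" "coord j (vertex_point (rho v)) = e"
    using \<open>v \<in> \<sigma>\<close> by (auto simp: CB3_iff)
qed

lemma face_pos_grid:
  assumes v: "v \<in> \<Union>D'"
  shows "fst v = grid_type (face_pos v)" "face_pos v \<in> grid"
proof -
  obtain t where t: "t \<in> set signed_perms" "vertex_point (rho v) = perm_apply t (base_point (fst v))"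
    using vertex_point_signed_perm rho_lift_vertex(1)[OF v] by fastforce
  then have "coord j (perm_apply t (base_point (fst v))) = e"
    using rho_lift_vertex(2)[OF v] by simp
  then show "fst v = grid_type (face_pos v)" "face_pos v \<in> grid"
    using bspec[OF bspec[OF bspec[OF bspec[OF face_vertices_project t(1)] gen_in_set] axis_in_set] e] t(2)
    unfolding face_pos_def grid_eq by simp_all
qed

lemma inj_on_face_pos: "inj_on face_pos (\<Union>D')"
proof (rule inj_onI)
  fix v v'
  assume v: "v \<in> \<Union>D'" and v': "v' \<in> \<Union>D'" and eq: "face_pos v = face_pos v'"
  have "fst (rho v) = fst (rho v')"
    using face_pos_grid(1)[OF v] face_pos_grid(1)[OF v'] eq by simp
  moreover have "vertex_point (rho v) = vertex_point (rho v')"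
    by (rule point_eqI_coord_drop_coord[of j])
      (use rho_lift_vertex(2)[OF v] rho_lift_vertex(2)[OF v'] eq in \<open>simp_all add: face_pos_def\<close>)
  ultimately have "rho v = rho v'"
    using vertex_eqI rho_lift_vertex(1)[OF v] rho_lift_vertex(1)[OF v'] by blast
  then show "v = v'"
    using lift_facts(2) v v' by (simp add: inj_on_eq_iff)
qed

lemma face_pos_image: "face_pos ` \<Union>D' = grid"
proof
  show "face_pos ` \<Union>D' \<subseteq> grid"
    using face_pos_grid(2) by blast
  show "grid \<subseteq> face_pos ` \<Union>D'"
  proof
    fix g
    assume "g \<in> grid"
    then obtain t i where t: "t \<in> set signed_perms" "coord j (perm_apply t (base_point i)) = e"
      "drop_coord j (perm_apply t (base_point i)) = g"
      using bspec[OF bspec[OF bspec[OF grid_points_lift axis_in_set] e]] unfolding grid_eq by blast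
    define w where "w = (i, point_coset i (perm_apply t (base_point i)))"
    have w: "w \<in> verts True" "vertex_point w = perm_apply t (base_point i)"
      using signed_perm_vertex[OF t(1)] by (auto simp: w_def)
    then have "{w} \<in> CB3"
      using t(1) by (auto simp: CB3_iff w_def)
    then have "{w} \<in> (\<lambda>\<sigma>. rho ` \<sigma>) ` D'"
      using w t(2) lift_facts(3) by simp
    then obtain \<sigma> where "\<sigma> \<in> D'" "rho ` \<sigma> = {w}"
      by auto
    then obtain v where "v \<in> \<Union>D'" "rho v = w"
      by (metis UnionI imageE insertI1)
    moreover have "face_pos v = g" if "rho v = w"
      using that w t(3) by (simp add: face_pos_def)
    ultimately show "g \<in> face_pos ` \<Union>D'"
      by blast
  qed
qed

lemma lift_simplex_in_chamber:
  assumes \<sigma>: "\<sigma> \<in> D'"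
  shows "\<exists>(m, d) \<in> set grid_chambers. face_pos ` \<sigma> \<subseteq> chamber m d"
proof -
  have "\<sigma> \<noteq> {}"
    using lift_facts(1) \<sigma> by (auto simp: subcomplex_def cplx_def)
  then obtain v0 where "v0 \<in> \<sigma>"
    by blast
  have \<rho>\<sigma>: "rho ` \<sigma> \<in> CB3" "\<forall>w \<in> rho ` \<sigma>. coord j (vertex_point w) = e"
    using lift_facts(3) \<sigma> by blast+
  then obtain t where t: "t \<in> set signed_perms" "perm_apply t (base_point S1) = unit_point j e"
    "\<forall>w \<in> rho ` \<sigma>. coord j (vertex_point w) = e \<longrightarrow> perm_apply t (base_point (fst w)) = vertex_point w"
    using face_vertices_centred_chamber[OF \<rho>\<sigma>(1) e, of "rho v0" j] \<open>v0 \<in> \<sigma>\<close> by blast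
  obtain m d where c: "(m, d) \<in> set grid_chambers" and md: "drop_coord j (perm_apply t (base_point S2)) = m"
    "drop_coord j (perm_apply t (base_point S3)) = m + d"
    using bspec[OF bspec[OF bspec[OF centred_chambers_project t(1)] axis_in_set] e] t(2) by blast
  have "face_pos v \<in> chamber m d" if "v \<in> \<sigma>" for v
  proof -
    have "face_pos v = drop_coord j (perm_apply t (base_point (fst v)))"
      using t(3) \<rho>\<sigma>(2) that by (simp add: face_pos_def)
    then show ?thesis
      using t(2) md by (cases "fst v") (auto simp: chamber_def)
  qed
  with c show ?thesis
    by blast
qed

lemma finite_lift_vertices: "finite (\<Union>D')"
proof -
  have "finite grid"
    by (simp add: grid_def)
  then show ?thesis
    using finite_image_iff[OF inj_on_face_pos] face_pos_image by simp
qed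

lemma lift_vertex_in_chamber:
  assumes v: "v \<in> \<Union>D'" and c: "(m, d) \<in> set grid_chambers" and ch: "face_pos v \<in> chamber m d"
    and t: "perm_apply t (base_point S1) = unit_point j e"
      "drop_coord j (perm_apply t (base_point S2)) = m" "coord j (perm_apply t (base_point S2)) = e"
      "drop_coord j (perm_apply t (base_point S3)) = m + d" "coord j (perm_apply t (base_point S3)) = e"
  shows "perm_apply t (base_point (fst v)) = vertex_point (rho v)"
proof (rule point_eqI_coord_drop_coord[of j])
  from ch consider "face_pos v = (0, 0)" | "face_pos v = m" | "face_pos v = m + d"
    by (auto simp: chamber_def)
  then have "coord j (perm_apply t (base_point (fst v))) = e
      \<and> drop_coord j (perm_apply t (base_point (fst v))) = face_pos v"
    by cases (use t face_pos_grid(1)[OF v] grid_chamber_facts[OF c] in simp_all)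
  then show "coord j (perm_apply t (base_point (fst v))) = coord j (vertex_point (rho v))"
    "drop_coord j (perm_apply t (base_point (fst v))) = drop_coord j (vertex_point (rho v))"
    using rho_lift_vertex(2)[OF v] by (simp_all add: face_pos_def)
qed

lemma lift_simplexI:
  assumes ne: "\<sigma> \<noteq> {}" and sub: "\<sigma> \<subseteq> \<Union>D'" and c: "(m, d) \<in> set grid_chambers"
    and ch: "face_pos ` \<sigma> \<subseteq> chamber m d"
  shows "\<sigma> \<in> D'"
proof -
  have "\<exists>t \<in> set signed_perms. perm_apply t (base_point S1) = unit_point j e
       \<and> drop_coord j (perm_apply t (base_point S2)) = m \<and> coord j (perm_apply t (base_point S2)) = e
       \<and> drop_coord j (perm_apply t (base_point S3)) = m + d \<and> coord j (perm_apply t (base_point S3)) = e"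
    using bspec[OF bspec[OF bspec[OF grid_chambers_lift axis_in_set] e] c] by (simp only: prod.case)
  then obtain t where t: "t \<in> set signed_perms" "perm_apply t (base_point S1) = unit_point j e"
    "drop_coord j (perm_apply t (base_point S2)) = m" "coord j (perm_apply t (base_point S2)) = e"
    "drop_coord j (perm_apply t (base_point S3)) = m + d" "coord j (perm_apply t (base_point S3)) = e"
    by blast
  have agree: "perm_apply t (base_point (fst v)) = vertex_point (rho v)" if "v \<in> \<sigma>" for v
    using lift_vertex_in_chamber[OF _ c _ t(2-6)] that sub ch by blast
  have "finite \<sigma>"
    using finite_lift_vertices sub by (rule finite_subset[rotated])
  moreover have "rho ` \<sigma> \<subseteq> verts True"
    using rho_lift_vertex(1) sub by blast
  ultimately have "rho ` \<sigma> \<in> CB3"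
    unfolding CB3_iff using ne t(1) agree by (intro conjI bexI[of _ t]) auto
  moreover have "\<forall>w \<in> rho ` \<sigma>. coord j (vertex_point w) = e"
    using rho_lift_vertex(2) sub by blast
  ultimately have "rho ` \<sigma> \<in> (\<lambda>\<sigma>. rho ` \<sigma>) ` D'"
    using lift_facts(3) by simp
  then obtain \<tau> where \<tau>: "\<tau> \<in> D'" "rho ` \<tau> = rho ` \<sigma>"
    by blast
  have "\<tau> \<subseteq> \<Union>D'"
    using \<tau>(1) by blast
  then have "\<tau> = \<sigma>"
    using inj_on_image_eq_iff[OF lift_facts(2) _ sub] \<tau>(2) by blast
  with \<tau> show ?thesis
    by simp
qed

lemma square_complex: "square_complex D' face_pos"
proof
  show "inj_on face_pos (\<Union>D')" "face_pos ` \<Union>D' = grid"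
    by (rule inj_on_face_pos, rule face_pos_image)
  show "fst v = grid_type (face_pos v)" if "v \<in> \<Union>D'" for v
    using face_pos_grid(1)[OF that] .
  show "\<sigma> \<in> D' \<longleftrightarrow> \<sigma> \<noteq> {} \<and> \<sigma> \<subseteq> \<Union>D' \<and> (\<exists>(m, d) \<in> set grid_chambers. face_pos ` \<sigma> \<subseteq> chamber m d)" for \<sigma>
  proof
    assume \<sigma>: "\<sigma> \<in> D'"
    then have "\<sigma> \<noteq> {}"
      using lift_facts(1) by (auto simp: subcomplex_def cplx_def)
    with \<sigma> show "\<sigma> \<noteq> {} \<and> \<sigma> \<subseteq> \<Union>D' \<and> (\<exists>(m, d) \<in> set grid_chambers. face_pos ` \<sigma> \<subseteq> chamber m d)"
      using lift_simplex_in_chamber by blast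
  qed (auto intro: lift_simplexI)
qed

end

lemma falk_s3_face_lift:
  assumes "falk_s3 D'"
  obtains j e where "face_lift D' j e"
proof -
  obtain r x where r: "is_reflection_conj_s3 r" and x: "x \<in> realize CB3 - realize (fixcplx r)"
    and lift: "is_lift D' {\<sigma> \<in> CB3. csimp \<sigma> \<subseteq> connected_component_set (realize CB3 - realize (fixcplx r)) x}"
    using assms unfolding falk_s3_def by blast
  obtain j where j: "word_act r = negate_coord j"
    using reflection_conj_s3_negates_coord[OF r] by blast
  obtain e where e: "e \<in> {1, -1}" and "{\<sigma> \<in> CB3. csimp \<sigma> \<subseteq> connected_component_set (realize CB3 - realize (fixcplx r)) x}
      = {\<sigma> \<in> CB3. \<forall>v \<in> \<sigma>. coord j (vertex_point v) = e}"
    using falk_component_eq_face[OF j x] by blast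
  with lift have "face_lift D' j e"
    by (intro face_lift.intro) simp_all
  then show ?thesis
    by (rule that)
qed

theorem mainTheorem13:
  assumes "falk_s3 D'"
  shows "CAT0 (realize D') (orth_dist D')"
proof -
  obtain j e where "face_lift D' j e"
    using falk_s3_face_lift[OF assms] .
  then interpret face_lift D' j e .
  interpret square_complex D' face_pos
    by (rule square_complex)
  show ?thesis
    by (rule square_complex_CAT0)
qed

end
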